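(* Consider the splitting scheme, with constant $\gamma,\sigma\in\mathbb{R}^{3N\times3N}$, $\sigma\sigma^T=\frac2\beta\gamma$, time step $\Delta t$, and i.i.d. standard Gaussian vectors $\mathcal{G}^n,\mathcal{G}^{n+1/2}$: (1) $p^{n+1/4}=p^n-\frac{\Delta t}4\gamma M^{-1}(p^n+p^{n+1/4})+\sqrt{\frac{\Delta t}2}\sigma\mathcal{G}^n+\nabla\xi(q^n)\lambda^{n+1/4}$, $\nabla\xi(q^n)^TM^{-1}p^{n+1/4}=0$; (2) $p^{n+1/2}=p^{n+1/4}-\frac{\Delta t}2\nabla V(q^n)+\nabla\xi(q^n)\lambda^{n+1/2}$, $q^{n+1}=q^n+\Delta t M^{-1}p^{n+1/2}$, $\xi(q^{n+1})=z$, $p^{n+3/4}=p^{n+1/2}-\frac{\Delta t}2\nabla V(q^{n+1})+\nabla\xi(q^{n+1})\lambda^{n+3/4}$, $\nabla\xi(q^{n+1})^TM^{-1}p^{n+3/4}=0$; (3) $p^{n+1}=p^{n+3/4}-\frac{\Delta t}4\gamma M^{-1}(p^{n+3/4}+p^{n+1})+\sqrt{\frac{\Delta t}2}\sigma\mathcal{G}^{n+1/2}+\nabla\xi(q^{n+1})\lambda^{n+1}$, $\nabla\xi(q^{n+1})^TM^{-1}p^{n+1}=0$. Then, as $\Delta t\to0$, the Lagrange multipliers $\lambda^{n+1/2},\lambda^{n+3/4}$ of step (2) satisfy $$\lambda^{n+1/2}=f^M_{\rm rgd}(q^n,p^{n+1/2})\frac{\Delta t}2+\mathrm{O}(\Delta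 t^2),\qquad \lambda^{n+3/4}=f^M_{\rm rgd}(q^{n+1},p^{n+1/2})\frac{\Delta t}2+\mathrm{O}(\Delta t^2),$$ and moreover $$\lambda^{n+1/2}+\lambda^{n+3/4}=\frac{\Delta t}2\Big(f^M_{\rm rgd}(q^n,p^{n+1/2})+f^M_{\rm rgd}(q^{n+1},p^{n+1/2})\Big)+\mathrm{O}(\Delta t^3),$$ $$\lambda^{n+1/2}+\lambda^{n+3/4}=\frac{\Delta t}2\Big(f^M_{\rm rgd}(q^n,p^{n+1/4})+f^M_{\rm rgd}(q^{n+1},p^{n+3/4})\Big)+\mathrm{O}(\Delta t^3).$$
   Context: $q,p\in\mathbb{R}^{3N}$; $M$ constant symmetric positive definite; $V$ smooth; $\beta>0$. $\xi=(\xi_1,\dots,\xi_m)^T$ smooth, $\nabla\xi\in\mathbb{R}^{3N\times m}$, $G_M=\nabla\xi^TM^{-1}\nabla\xi$ invertible on $\{\xi=z\}$; the $\lambda$'s in $\mathbb{R}^m$ are the Lagrange multipliers enforcing the indicated constraints. $f^M_{\rm rgd}(q,p)=G_M^{-1}(q)\nabla\xi(q)^TM^{-1}\nabla V(q)-G_M^{-1}(q)\mathrm{Hess}_q(\xi)(M^{-1}p,M^{-1}p)$, where $\mathrm{Hess}_q(\xi)(v_1,v_2)\in\mathbb{R}^m$ has components $v_1^T\nabla^2\xi_i(q)v_2$. *)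

theory Defs
  imports "HOL-Analysis.Analysis"
begin

coinductive smooth_map :: "('a::real_normed_vector \<Rightarrow> 'b::real_normed_vector) \<Rightarrow> bool" where
  "(\<forall>x. f differentiable (at x)) \<Longrightarrow> (\<forall>v. smooth_map (\<lambda>x. frechet_derivative f (at x) v))
     \<Longrightarrow> smooth_map f"

definition grad_xi :: "(real^'n \<Rightarrow> real^'m) \<Rightarrow> real^'n \<Rightarrow> real^'m^'n" where
  "grad_xi \<xi> q = transpose (jacobian \<xi> (at q))"

definition grad_V :: "(real^'n \<Rightarrow> real) \<Rightarrow> real^'n \<Rightarrow> real^'n" where
  "grad_V V q = (\<chi> j. frechet_derivative V (at q) (axis j 1))"

definition G_M :: "real^'n^'n \<Rightarrow> (real^'n \<Rightarrow> real^'m) \<Rightarrow> real^'n \<Rightarrow> real^'m^'m" where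
  "G_M M \<xi> q = transpose (grad_xi \<xi> q) ** matrix_inv M ** grad_xi \<xi> q"

text \<open>Hess_q(xi)(v1,v2), the vector with components v1^T (nabla^2 xi_i)(q) v2\<close>
definition hess_xi :: "(real^'n \<Rightarrow> real^'m) \<Rightarrow> real^'n \<Rightarrow> real^'n \<Rightarrow> real^'n \<Rightarrow> real^'m" where
  "hess_xi \<xi> q v1 v2 = frechet_derivative (\<lambda>x. jacobian \<xi> (at x) *v v2) (at q) v1"

definition f_rgd :: "real^'n^'n \<Rightarrow> (real^'n \<Rightarrow> real^'m) \<Rightarrow> (real^'n \<Rightarrow> real)
    \<Rightarrow> real^'n \<Rightarrow> real^'n \<Rightarrow> real^'m" where
  "f_rgd M \<xi> V q p =
     matrix_inv (G_M M \<xi> q) *v (transpose (grad_xi \<xi> q) *v (matrix_inv M *v grad_V V q))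
   - matrix_inv (G_M M \<xi> q) *v hess_xi \<xi> q (matrix_inv M *v p) (matrix_inv M *v p)"

end

theory Submission
  imports Defs
begin

text \<open>Write \<open>u = M\<^sup>-\<^sup>1 p\<^sup>n\<^sup>+\<^sup>1\<^sup>/\<^sup>2\<close>, so that \<open>q\<^sup>n\<^sup>+\<^sup>1 = q\<^sup>n + dt u\<close>. The tangency of
  \<open>p\<^sup>n\<^sup>+\<^sup>1\<^sup>/\<^sup>4\<close> and \<open>p\<^sup>n\<^sup>+\<^sup>3\<^sup>/\<^sup>4\<close> determines \<open>G\<^sub>M \<lambda>\<^sup>n\<^sup>+\<^sup>1\<^sup>/\<^sup>2\<close> and \<open>G\<^sub>M \<lambda>\<^sup>n\<^sup>+\<^sup>3\<^sup>/\<^sup>4\<close> through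
  \<open>\<nabla>\<xi>\<^sup>T u\<close> at the two end points, and the errors of the first two expansions are \<open>G\<^sub>M\<^sup>-\<^sup>1\<close>
  applied to the defects \<open>\<nabla>\<xi>(q\<^sup>n)\<^sup>T u + (dt/2) Hess \<xi>(q\<^sup>n)(u,u)\<close> and
  \<open>-\<nabla>\<xi>(q\<^sup>n\<^sup>+\<^sup>1)\<^sup>T u + (dt/2) Hess \<xi>(q\<^sup>n\<^sup>+\<^sup>1)(u,u)\<close>. Taylor expansion of
  \<open>\<xi>(q\<^sup>n\<^sup>+\<^sup>1) = \<xi>(q\<^sup>n)\<close> from either end point shows that both defects are \<open>O(dt\<^sup>2)\<close> and that
  their sum is \<open>O(dt\<^sup>3)\<close>; as \<open>G\<^sub>M\<^sup>-\<^sup>1\<close> changes by \<open>O(dt)\<close> along the step, this gives the third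
  expansion. For the fourth, \<open>p\<^sup>n\<^sup>+\<^sup>1\<^sup>/\<^sup>4\<close> and \<open>p\<^sup>n\<^sup>+\<^sup>3\<^sup>/\<^sup>4\<close> differ from \<open>p\<^sup>n\<^sup>+\<^sup>1\<^sup>/\<^sup>2\<close> by
  \<open>O(dt)\<close> shifts whose sum is \<open>O(dt\<^sup>2)\<close>. Boundedness of all quantities as \<open>dt \<rightarrow> 0\<close>
  comes from absorption arguments.\<close>

section \<open>Smooth maps and iterated directional derivatives\<close>

lemma smooth_map_differentiable: "smooth_map f \<Longrightarrow> f differentiable (at x)"
  by (erule smooth_map.cases) auto

lemma smooth_map_frechet_derivative:
  "smooth_map f \<Longrightarrow> smooth_map (\<lambda>x. frechet_derivative f (at x) v)"
  by (erule smooth_map.cases) auto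

lemma smooth_map_has_derivative:
  "smooth_map f \<Longrightarrow> (f has_derivative frechet_derivative f (at x)) (at x)"
  using smooth_map_differentiable frechet_derivative_works by blast

lemma smooth_map_linear_derivative: "smooth_map f \<Longrightarrow> linear (frechet_derivative f (at x))"
  using smooth_map_has_derivative by (rule has_derivative_linear)

lemma smooth_map_continuous_on: "smooth_map f \<Longrightarrow> continuous_on S f"
  by (intro continuous_at_imp_continuous_on ballI differentiable_imp_continuous_within
      smooth_map_differentiable)

text \<open>\<open>dirderiv [w\<^sub>1, \<dots>, w\<^sub>k] f y\<close> is the \<open>k\<close>-th derivative of \<open>f\<close> at \<open>y\<close> applied to
  \<open>w\<^sub>1, \<dots>, w\<^sub>k\<close>; the direction \<open>w\<^sub>1\<close> is differentiated first.\<close>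

fun dirderiv :: "'a::real_normed_vector list \<Rightarrow> ('a \<Rightarrow> 'b::real_normed_vector) \<Rightarrow> 'a \<Rightarrow> 'b" where
  "dirderiv [] f = f"
| "dirderiv (w # ws) f = dirderiv ws (\<lambda>y. frechet_derivative f (at y) w)"

lemma smooth_map_dirderiv: "smooth_map f \<Longrightarrow> smooth_map (dirderiv ws f)"
  by (induction ws arbitrary: f) (simp_all add: smooth_map_frechet_derivative)

lemma dirderiv_append: "dirderiv (ws @ vs) f = dirderiv vs (dirderiv ws f)"
  by (induction ws arbitrary: f) auto

lemma dirderiv_snoc: "dirderiv (ws @ [w]) f = (\<lambda>y. frechet_derivative (dirderiv ws f) (at y) w)"
  by (simp add: dirderiv_append)

lemma dirderiv_replicate_Suc:
  "dirderiv (replicate (Suc k) d) f = (\<lambda>y. frechet_derivative (dirderiv (replicate k d) f) (at y) d)"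
  by (simp only: replicate_Suc replicate_append_same[symmetric] dirderiv_snoc)

lemma dirderiv_sum:
  assumes "finite I" "\<And>i. i \<in> I \<Longrightarrow> smooth_map (f i)"
  shows "dirderiv ws (\<lambda>y. \<Sum>i\<in>I. c i *\<^sub>R f i y) = (\<lambda>y. \<Sum>i\<in>I. c i *\<^sub>R dirderiv ws (f i) y)"
  using assms(2)
proof (induction ws arbitrary: f)
  case (Cons w ws)
  have "((\<lambda>y. \<Sum>i\<in>I. c i *\<^sub>R f i y) has_derivative
          (\<lambda>v. \<Sum>i\<in>I. c i *\<^sub>R frechet_derivative (f i) (at x) v)) (at x)" for x
    by (intro has_derivative_sum has_derivative_scaleR_right smooth_map_has_derivative Cons.prems)
  then have "frechet_derivative (\<lambda>y. \<Sum>i\<in>I. c i *\<^sub>R f i y) (at x)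
      = (\<lambda>v. \<Sum>i\<in>I. c i *\<^sub>R frechet_derivative (f i) (at x) v)" for x
    by (rule frechet_derivative_at[symmetric])
  then show ?case
    using Cons.IH[of "\<lambda>i y. frechet_derivative (f i) (at y) w"]
    by (simp add: smooth_map_frechet_derivative Cons.prems)
qed simp

lemma dirderiv_Cons_sum:
  assumes "smooth_map f" "finite I"
  shows "dirderiv ((\<Sum>i\<in>I. c i *\<^sub>R v i) # ws) f y = (\<Sum>i\<in>I. c i *\<^sub>R dirderiv (v i # ws) f y)"
proof -
  interpret linear "frechet_derivative f (at x)" for x
    by (rule smooth_map_linear_derivative[OF assms(1)])
  have "(\<lambda>y. frechet_derivative f (at y) (\<Sum>i\<in>I. c i *\<^sub>R v i))
      = (\<lambda>y. \<Sum>i\<in>I. c i *\<^sub>R frechet_derivative f (at y) (v i))"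
    by (simp add: sum scale)
  then show ?thesis
    by (simp add: dirderiv_sum assms smooth_map_frechet_derivative)
qed

lemma dirderiv_Cons_linear:
  assumes "smooth_map f"
  shows "dirderiv ((a *\<^sub>R v + b *\<^sub>R w) # ws) f y
           = a *\<^sub>R dirderiv (v # ws) f y + b *\<^sub>R dirderiv (w # ws) f y"
  using dirderiv_Cons_sum[OF assms, of UNIV "\<lambda>i. if i then a else b" "\<lambda>i. if i then v else w"]
  by (simp add: UNIV_bool ac_simps)

lemma dirderiv_snoc_linear:
  assumes "smooth_map f"
  shows "dirderiv (ws @ [a *\<^sub>R v + b *\<^sub>R w]) f y
           = a *\<^sub>R dirderiv (ws @ [v]) f y + b *\<^sub>R dirderiv (ws @ [w]) f y"
  using smooth_map_linear_derivative[OF smooth_map_dirderiv[OF assms, of ws]]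
  by (simp add: dirderiv_snoc linear_add linear_cmul)

lemma dirderiv_Cons_Basis:
  fixes f :: "'a::euclidean_space \<Rightarrow> 'b::real_normed_vector"
  assumes "smooth_map f"
  shows "dirderiv (w # ws) f y = (\<Sum>b\<in>Basis. (w \<bullet> b) *\<^sub>R dirderiv (b # ws) f y)"
  using dirderiv_Cons_sum[OF assms finite_Basis, of "\<lambda>b. w \<bullet> b" "\<lambda>b. b"]
  by (simp add: euclidean_representation)

lemma dirderiv_bounded:
  fixes f :: "'a::euclidean_space \<Rightarrow> 'b::real_normed_vector"
  assumes "smooth_map f" "compact K"
  shows "\<exists>C\<ge>0. \<forall>y\<in>K. \<forall>ws. length ws = n \<longrightarrow> norm (dirderiv ws f y) \<le> C * prod_list (map norm ws)"
  using assms(1)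
proof (induction n arbitrary: f)
  case 0
  have "bounded (f ` K)"
    by (intro compact_imp_bounded compact_continuous_image smooth_map_continuous_on 0 assms(2))
  then obtain B where "\<forall>x\<in>f ` K. norm x \<le> B"
    by (auto simp: bounded_iff)
  then show ?case
    by (intro exI[of _ "max B 0"]) auto
next
  case (Suc n)
  have "\<forall>b\<in>Basis. \<exists>C\<ge>0. \<forall>y\<in>K. \<forall>ws. length ws = n \<longrightarrow>
      norm (dirderiv (b # ws) f y) \<le> C * prod_list (map norm ws)"
    using Suc.IH[OF smooth_map_frechet_derivative[OF Suc.prems]] by simp
  from bchoice[OF this] obtain C where C: "\<forall>b\<in>Basis. C b \<ge> 0 \<and> (\<forall>y\<in>K. \<forall>ws. length ws = n \<longrightarrow>
      norm (dirderiv (b # ws) f y) \<le> C b * prod_list (map norm ws))" ..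
  show ?case
  proof (intro exI[of _ "\<Sum>b\<in>Basis. C b"] conjI ballI allI impI)
    fix y and ws :: "'a list" assume y: "y \<in> K" and "length ws = Suc n"
    then obtain w ws' where ws: "ws = w # ws'" and "length ws' = n" by (cases ws) auto
    have "norm (dirderiv ws f y) = norm (\<Sum>b\<in>Basis. (w \<bullet> b) *\<^sub>R dirderiv (b # ws') f y)"
      unfolding ws by (rule arg_cong[where f = norm], rule dirderiv_Cons_Basis[OF Suc.prems])
    also have "\<dots> \<le> (\<Sum>b\<in>Basis. norm ((w \<bullet> b) *\<^sub>R dirderiv (b # ws') f y))"
      by (rule norm_sum)
    also have "\<dots> \<le> (\<Sum>b\<in>Basis. norm w * (C b * prod_list (map norm ws')))"
    proof (rule sum_mono)
      fix b :: 'a assume b: "b \<in> Basis"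
      have "norm ((w \<bullet> b) *\<^sub>R dirderiv (b # ws') f y) = \<bar>w \<bullet> b\<bar> * norm (dirderiv (b # ws') f y)"
        by simp
      also have "\<dots> \<le> norm w * (C b * prod_list (map norm ws'))"
        by (rule mult_mono) (use C b y \<open>length ws' = n\<close> Basis_le_norm[OF b] in auto)
      finally show "norm ((w \<bullet> b) *\<^sub>R dirderiv (b # ws') f y)
          \<le> norm w * (C b * prod_list (map norm ws'))" .
    qed
    also have "\<dots> = (\<Sum>b\<in>Basis. C b) * prod_list (map norm ws)"
      by (simp add: ws sum_distrib_left sum_distrib_right mult_ac)
    finally show "norm (dirderiv ws f y) \<le> (\<Sum>b\<in>Basis. C b) * prod_list (map norm ws)" .
  qed (use C in \<open>simp add: sum_nonneg\<close>)
qed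


lemma jacobian_mult_eq_dirderiv:
  fixes f :: "real^'n \<Rightarrow> real^'m"
  assumes "smooth_map f"
  shows "jacobian f (at y) *v v = dirderiv [v] f y"
proof -
  have "(f has_derivative (\<lambda>h. jacobian f (at y) *v h)) (at y)"
    using smooth_map_differentiable[OF assms] by (simp only: jacobian_works)
  from frechet_derivative_at[OF this] show ?thesis
    by simp
qed

lemma hess_xi_eq_dirderiv:
  assumes "smooth_map \<xi>"
  shows "hess_xi \<xi> y v w = dirderiv [w, v] \<xi> y"
  by (simp add: hess_xi_def jacobian_mult_eq_dirderiv[OF assms])

lemma jacobian_eq_partial_derivatives:
  "jacobian f (at y) = transpose (\<chi> j. dirderiv [axis j 1] f y)"
  by (simp add: jacobian_def matrix_def transpose_def vec_eq_iff)

lemma grad_V_eq_partial_derivatives: "grad_V V y = (\<chi> j. dirderiv [axis j 1] V y)"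
  by (simp add: grad_V_def)

section \<open>Taylor expansion\<close>

lemma has_field_derivative_along_line:
  fixes g :: "'a::euclidean_space \<Rightarrow> 'b::euclidean_space"
  assumes "smooth_map g"
  shows "((\<lambda>s. g (x + s *\<^sub>R d) \<bullet> b) has_field_derivative
           (frechet_derivative g (at (x + s *\<^sub>R d)) d \<bullet> b)) (at s)"
proof -
  have "((\<lambda>s. x + s *\<^sub>R d) has_derivative (\<lambda>t. t *\<^sub>R d)) (at s)"
    by (auto intro!: derivative_eq_intros)
  from diff_chain_at[OF this smooth_map_has_derivative[OF assms]]
  have "((\<lambda>s. g (x + s *\<^sub>R d) \<bullet> b) has_derivative
          (\<lambda>t. frechet_derivative g (at (x + s *\<^sub>R d)) (t *\<^sub>R d) \<bullet> b)) (at s)"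
    by (auto simp: o_def dest: bounded_linear.has_derivative[OF bounded_linear_inner_left])
  then show ?thesis
    by (rule has_derivative_imp_has_field_derivative)
      (simp add: linear_cmul[OF smooth_map_linear_derivative[OF assms]])
qed

text \<open>The Lagrange form of the remainder holds only coordinatewise, hence the factor
  \<open>DIM('b)\<close>.\<close>

lemma taylor_dirderiv_segment:
  fixes f :: "'a::euclidean_space \<Rightarrow> 'b::euclidean_space"
  assumes f: "smooth_map f" and n: "0 < n"
    and B: "\<And>s. 0 \<le> s \<Longrightarrow> s \<le> 1 \<Longrightarrow> norm (dirderiv (replicate n d) f (x + s *\<^sub>R d)) \<le> B"
  shows "norm (f (x + d) - (\<Sum>j<n. (1 / fact j) *\<^sub>R dirderiv (replicate j d) f x))
           \<le> real DIM('b) * B / fact n"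
proof -
  let ?E = "f (x + d) - (\<Sum>j<n. (1 / fact j) *\<^sub>R dirderiv (replicate j d) f x)"
  have "\<bar>?E \<bullet> b\<bar> \<le> B / fact n" if b: "b \<in> Basis" for b
  proof -
    define g where "g m s = dirderiv (replicate m d) f (x + s *\<^sub>R d) \<bullet> b" for m s
    have "\<forall>m t. m < n \<and> 0 \<le> t \<and> t \<le> 1 \<longrightarrow> DERIV (g m) t :> g (Suc m) t"
      unfolding g_def dirderiv_replicate_Suc
      by (blast intro: has_field_derivative_along_line smooth_map_dirderiv f)
    from Maclaurin[OF zero_less_one n refl this]
    obtain t where t: "0 < t" "t < 1"
      and g1: "g 0 1 = (\<Sum>m<n. g m 0 / fact m * 1 ^ m) + g n t / fact n * 1 ^ n"
      by blast
    have "?E \<bullet> b = g 0 1 - (\<Sum>m<n. g m 0 / fact m)"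
      by (simp add: g_def inner_diff_left inner_sum_left divide_inverse mult.commute)
    also have "\<dots> = g n t / fact n"
      using g1 by simp
    finally have "\<bar>?E \<bullet> b\<bar> = \<bar>g n t\<bar> / fact n"
      by simp
    also have "\<dots> \<le> B / fact n"
      using Basis_le_norm[OF b] B[of t] t
      by (intro divide_right_mono) (auto simp: g_def intro: order_trans)
    finally show ?thesis .
  qed
  then have "norm ?E \<le> (\<Sum>b\<in>(Basis::'b set). B / fact n)"
    by (intro order_trans[OF norm_le_l1] sum_mono)
  then show ?thesis
    by simp
qed

lemma convex_segment_point:
  assumes "convex K" "x \<in> K" "x + d \<in> K" "0 \<le> s" "s \<le> 1"
  shows "x + s *\<^sub>R d \<in> K"
proof -
  have "x + s *\<^sub>R d = (1 - s) *\<^sub>R x + s *\<^sub>R (x + d)"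
    by (simp add: algebra_simps)
  then show ?thesis
    using convexD[OF assms(1-3), of "1 - s" s] assms(4,5) by simp
qed

lemma taylor_dirderiv:
  fixes f :: "'a::euclidean_space \<Rightarrow> 'b::euclidean_space"
  assumes "smooth_map f" "compact K" "convex K" "0 < n"
  shows "\<exists>C. \<forall>x\<in>K. \<forall>d. x + d \<in> K \<longrightarrow>
    norm (dirderiv (replicate k d) f (x + d)
          - (\<Sum>j<n. (1 / fact j) *\<^sub>R dirderiv (replicate (k + j) d) f x)) \<le> C * norm d ^ (k + n)"
proof -
  obtain C where C: "\<forall>y\<in>K. \<forall>ws. length ws = k + n \<longrightarrow>
      norm (dirderiv ws f y) \<le> C * prod_list (map norm ws)"
    using dirderiv_bounded[OF assms(1,2)] by blast
  have shift: "dirderiv (replicate j d) (dirderiv (replicate k d) f) = dirderiv (replicate (k + j) d) f"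
    for j d
    by (simp add: dirderiv_append[symmetric] replicate_add)
  show ?thesis
  proof (intro exI[of _ "real DIM('b) * C / fact n"] ballI allI impI)
    fix x d assume x: "x \<in> K" and xd: "x + d \<in> K"
    have "norm (dirderiv (replicate k d) f (x + d)
          - (\<Sum>j<n. (1 / fact j) *\<^sub>R dirderiv (replicate j d) (dirderiv (replicate k d) f) x))
        \<le> real DIM('b) * (C * norm d ^ (k + n)) / fact n"
    proof (rule taylor_dirderiv_segment[OF smooth_map_dirderiv[OF assms(1)] assms(4)])
      fix s :: real assume "0 \<le> s" "s \<le> 1"
      then have "x + s *\<^sub>R d \<in> K"
        by (rule convex_segment_point[OF assms(3) x xd])
      then show "norm (dirderiv (replicate n d) (dirderiv (replicate k d) f) (x + s *\<^sub>R d))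
          \<le> C * norm d ^ (k + n)"
        using C[rule_format, of _ "replicate (k + n) d"] by (simp add: shift prod_list_replicate)
    qed
    then show "norm (dirderiv (replicate k d) f (x + d)
          - (\<Sum>j<n. (1 / fact j) *\<^sub>R dirderiv (replicate (k + j) d) f x))
        \<le> real DIM('b) * C / fact n * norm d ^ (k + n)"
      by (simp add: shift)
  qed
qed

lemma dirderiv_lipschitz:
  fixes f :: "'a::euclidean_space \<Rightarrow> 'b::euclidean_space"
  assumes "smooth_map f" "compact K" "convex K"
  shows "\<exists>L. \<forall>ws y y'. length ws = k \<longrightarrow> y \<in> K \<longrightarrow> y' \<in> K \<longrightarrow>
     norm (dirderiv ws f y' - dirderiv ws f y) \<le> L * prod_list (map norm ws) * norm (y' - y)"
proof -
  obtain C where C: "\<forall>y\<in>K. \<forall>ws. length ws = Suc k \<longrightarrow>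
      norm (dirderiv ws f y) \<le> C * prod_list (map norm ws)"
    using dirderiv_bounded[OF assms(1,2)] by blast
  show ?thesis
  proof (intro exI[of _ "real DIM('b) * C"] allI impI)
    fix ws :: "'a list" and y y' assume l: "length ws = k" and y: "y \<in> K" "y' \<in> K"
    have "norm (dirderiv ws f (y + (y' - y))
          - (\<Sum>j<1. (1 / fact j) *\<^sub>R dirderiv (replicate j (y' - y)) (dirderiv ws f) y))
       \<le> real DIM('b) * (C * prod_list (map norm ws) * norm (y' - y)) / fact 1"
    proof (rule taylor_dirderiv_segment[OF smooth_map_dirderiv[OF assms(1)]])
      fix s :: real assume "0 \<le> s" "s \<le> 1"
      then have "y + s *\<^sub>R (y' - y) \<in> K"
        using y by (intro convex_segment_point[OF assms(3)]) auto
      then show "norm (dirderiv (replicate 1 (y' - y)) (dirderiv ws f) (y + s *\<^sub>R (y' - y)))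
          \<le> C * prod_list (map norm ws) * norm (y' - y)"
        using C[rule_format, of _ "ws @ [y' - y]"] l by (simp add: dirderiv_append mult.assoc)
    qed simp
    then show "norm (dirderiv ws f y' - dirderiv ws f y)
        \<le> real DIM('b) * C * prod_list (map norm ws) * norm (y' - y)"
      by (simp add: mult_ac)
  qed
qed

section \<open>Matrix norms\<close>

lemma norm_scaleR_le_norm: "\<bar>c\<bar> \<le> 1 \<Longrightarrow> norm (c *\<^sub>R x) \<le> norm x"
  by (simp add: mult_left_le_one_le)

lemma norm_vec_le_sum: "norm (x :: 'a::real_normed_vector^'n) \<le> (\<Sum>i\<in>UNIV. norm (x $ i))"
  by (simp add: norm_vec_def L2_set_le_sum)

lemma norm_matrix_power2: "(norm (A :: real^'n^'m))\<^sup>2 = (\<Sum>i\<in>UNIV. \<Sum>j\<in>UNIV. (A $ i $ j)\<^sup>2)"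
proof -
  have row: "(norm (v :: real^'n))\<^sup>2 = (\<Sum>j\<in>UNIV. (v $ j)\<^sup>2)" for v
    by (simp add: norm_vec_def L2_set_def sum_nonneg)
  show ?thesis
    by (simp add: norm_vec_def L2_set_def sum_nonneg row)
qed

lemma norm_transpose: "norm (transpose (A :: real^'n^'m)) = norm A"
proof -
  have "(norm (transpose A))\<^sup>2 = (norm A)\<^sup>2"
    by (simp add: norm_matrix_power2 transpose_def sum.swap[of _ "UNIV :: 'm set"])
  then show ?thesis
    by simp
qed

lemma transpose_diff: "transpose (A - B) = transpose A - transpose (B :: 'a::ab_group_add^'n^'m)"
  by (simp add: transpose_def vec_eq_iff)

lemma norm_matrix_vector_mult_le:
  fixes A :: "real^'n^'m"
  shows "norm (A *v x) \<le> norm A * norm x"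
proof -
  have "norm (A *v x) \<le> norm (norm x *\<^sub>R A)"
  proof (rule norm_le_componentwise_cart)
    fix i
    show "norm ((A *v x) $ i) \<le> norm ((norm x *\<^sub>R A) $ i)"
      using Cauchy_Schwarz_ineq2[of "A $ i" x] by (simp add: matrix_mult_dot mult.commute)
  qed
  then show ?thesis
    by (simp add: mult.commute)
qed

lemma matrix_matrix_mult_row: "(A ** B) $ i = transpose B *v (A $ i :: 'a::comm_semiring_1^'n)"
  by (auto simp: matrix_matrix_mult_def matrix_vector_mult_def transpose_def vec_eq_iff mult.commute
      intro!: sum.cong)

lemma norm_matrix_mult_le:
  fixes A :: "real^'n^'m" and B :: "real^'k^'n"
  shows "norm (A ** B) \<le> norm A * norm B"
proof -
  have "norm (A ** B) \<le> norm (norm B *\<^sub>R A)"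
  proof (rule norm_le_componentwise_cart)
    fix i
    show "norm ((A ** B) $ i) \<le> norm ((norm B *\<^sub>R A) $ i)"
      using norm_matrix_vector_mult_le[of "transpose B" "A $ i"]
      by (simp add: matrix_matrix_mult_row norm_transpose)
  qed
  then show ?thesis
    by (simp add: mult.commute)
qed

lemma matrix_diff_mult: "(A - B) ** C = A ** C - B ** (C :: real^'k^'n)"
  for A B :: "real^'n^'m"
  by (simp add: matrix_eq matrix_vector_mul_assoc[symmetric] matrix_vector_mult_diff_rdistrib)

lemma matrix_mult_diff: "C ** (A - B) = C ** A - C ** (B :: real^'k^'n)"
  for C :: "real^'n^'m"
  by (simp add: matrix_eq matrix_vector_mul_assoc[symmetric] matrix_vector_mult_diff_distrib
      matrix_vector_mult_diff_rdistrib)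

lemma invertible_matrix_inv:
  assumes "invertible A"
  shows "A ** matrix_inv A = mat 1" "matrix_inv A ** A = mat 1"
  using someI_ex[OF assms[unfolded invertible_def]] by (simp_all add: matrix_inv_def)

lemma matrix_inv_diff:
  fixes A A0 :: "real^'n^'n"
  assumes "invertible A" "invertible A0"
  shows "matrix_inv A - matrix_inv A0 = matrix_inv A0 ** (A0 - A) ** matrix_inv A"
proof -
  have "matrix_inv A0 ** A0 ** matrix_inv A = matrix_inv A"
    by (simp add: invertible_matrix_inv(2)[OF assms(2)])
  moreover have "matrix_inv A0 ** A ** matrix_inv A = matrix_inv A0"
    by (simp add: invertible_matrix_inv(1)[OF assms(1)] flip: matrix_mul_assoc)
  ultimately show ?thesis
    by (simp add: matrix_mult_diff matrix_diff_mult)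
qed

lemma partial_derivatives_bounded_lipschitz:
  fixes f :: "real^'n \<Rightarrow> 'b::euclidean_space"
  assumes "smooth_map f" "compact K" "convex K"
  defines "D y \<equiv> \<chi> j. dirderiv [axis j 1] f y"
  shows "\<exists>B L. (\<forall>y\<in>K. norm (D y) \<le> B) \<and> (\<forall>y\<in>K. \<forall>y'\<in>K. norm (D y' - D y) \<le> L * norm (y' - y))"
proof -
  obtain C where C: "\<forall>y\<in>K. \<forall>ws. length ws = 1 \<longrightarrow> norm (dirderiv ws f y) \<le> C * prod_list (map norm ws)"
    using dirderiv_bounded[OF assms(1,2)] by blast
  obtain L where L: "\<forall>ws y y'. length ws = 1 \<longrightarrow> y \<in> K \<longrightarrow> y' \<in> K \<longrightarrow>
      norm (dirderiv ws f y' - dirderiv ws f y) \<le> L * prod_list (map norm ws) * norm (y' - y)"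
    using dirderiv_lipschitz[OF assms(1-3)] by blast
  have "norm (D y) \<le> real CARD('n) * C" if "y \<in> K" for y
  proof -
    have "norm (D y) \<le> (\<Sum>j\<in>UNIV. norm (dirderiv [axis j 1] f y))"
      using norm_vec_le_sum[of "D y"] by (simp add: D_def)
    also have "\<dots> \<le> (\<Sum>j\<in>(UNIV::'n set). C)"
    proof (rule sum_mono)
      fix j :: 'n
      show "norm (dirderiv [axis j 1] f y) \<le> C"
        using C[rule_format, OF that, of "[axis j 1]"] by simp
    qed
    finally show ?thesis by simp
  qed
  moreover have "norm (D y' - D y) \<le> (real CARD('n) * L) * norm (y' - y)" if "y \<in> K" "y' \<in> K" for y y'
  proof -
    have "norm (D y' - D y) \<le> (\<Sum>j\<in>UNIV. norm (dirderiv [axis j 1] f y' - dirderiv [axis j 1] f y))"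
      using norm_vec_le_sum[of "D y' - D y"] by (simp add: D_def)
    also have "\<dots> \<le> (\<Sum>j\<in>(UNIV::'n set). L * norm (y' - y))"
    proof (rule sum_mono)
      fix j :: 'n
      show "norm (dirderiv [axis j 1] f y' - dirderiv [axis j 1] f y) \<le> L * norm (y' - y)"
        using L[rule_format, of "[axis j 1]" y y'] that by simp
    qed
    finally show ?thesis by simp
  qed
  ultimately show ?thesis
    by blast
qed

lemma jacobian_bounded_lipschitz:
  fixes f :: "real^'n \<Rightarrow> real^'m"
  assumes "smooth_map f" "compact K" "convex K"
  shows "\<exists>B L. (\<forall>y\<in>K. norm (jacobian f (at y)) \<le> B)
              \<and> (\<forall>y\<in>K. \<forall>y'\<in>K. norm (jacobian f (at y') - jacobian f (at y)) \<le> L * norm (y' - y))"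
  using partial_derivatives_bounded_lipschitz[OF assms]
  by (simp add: jacobian_eq_partial_derivatives norm_transpose transpose_diff[symmetric])

lemma grad_V_bounded_lipschitz:
  fixes V :: "real^'n \<Rightarrow> real"
  assumes "smooth_map V" "compact K" "convex K"
  shows "\<exists>B L. (\<forall>y\<in>K. norm (grad_V V y) \<le> B)
              \<and> (\<forall>y\<in>K. \<forall>y'\<in>K. norm (grad_V V y' - grad_V V y) \<le> L * norm (y' - y))"
  using partial_derivatives_bounded_lipschitz[OF assms] by (simp add: grad_V_eq_partial_derivatives)


section \<open>Orders of magnitude as \<open>dt \<rightarrow> 0\<close>\<close>

definition O_dt :: "nat \<Rightarrow> (real \<Rightarrow> 'a::real_normed_vector) \<Rightarrow> bool" where
  "O_dt k f \<longleftrightarrow> (\<exists>C. \<forall>\<^sub>F dt in at_right 0. norm (f dt) \<le> C * dt ^ k)"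

lemma eventually_dt_in_unit: "\<forall>\<^sub>F dt in at_right 0. 0 < dt \<and> dt \<le> (1::real)"
  unfolding eventually_at_right_field by (intro exI[of _ 1]) auto

lemma O_dtI: "\<forall>\<^sub>F dt in at_right 0. norm (f dt) \<le> C * dt ^ k \<Longrightarrow> O_dt k f"
  unfolding O_dt_def by blast

lemma O_dtE:
  assumes "O_dt k f"
  obtains C where "0 \<le> C" "\<forall>\<^sub>F dt in at_right 0. norm (f dt) \<le> C * dt ^ k"
proof -
  obtain C where "\<forall>\<^sub>F dt in at_right 0. norm (f dt) \<le> C * dt ^ k"
    using assms unfolding O_dt_def by blast
  with eventually_dt_in_unit have "\<forall>\<^sub>F dt in at_right 0. norm (f dt) \<le> max C 0 * dt ^ k"
    by eventually_elim (auto intro: order_trans mult_right_mono)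
  then show thesis
    by (rule that[rotated]) simp
qed

lemma O_dt_const: "O_dt 0 (\<lambda>_. c)"
  by (rule O_dtI[of _ "norm c"]) simp

lemma O_dt_mult_bound:
  assumes "\<forall>\<^sub>F dt in at_right 0. norm (h dt) \<le> C * norm (f dt) * norm (g dt)"
    and "O_dt i f" "O_dt j g"
  shows "O_dt (i + j) h"
proof -
  obtain A where A: "0 \<le> A" "\<forall>\<^sub>F dt in at_right 0. norm (f dt) \<le> A * dt ^ i"
    using assms(2) by (rule O_dtE)
  obtain B where B: "0 \<le> B" "\<forall>\<^sub>F dt in at_right 0. norm (g dt) \<le> B * dt ^ j"
    using assms(3) by (rule O_dtE)
  show ?thesis
  proof (rule O_dtI[of _ "\<bar>C\<bar> * A * B"])
    show "\<forall>\<^sub>F dt in at_right 0. norm (h dt) \<le> \<bar>C\<bar> * A * B * dt ^ (i + j)"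
      using assms(1) A(2) B(2)
    proof eventually_elim
      case (elim dt)
      have "C * (norm (f dt) * norm (g dt)) \<le> \<bar>C\<bar> * (norm (f dt) * norm (g dt))"
        by (intro mult_right_mono) auto
      with elim(1) have "norm (h dt) \<le> \<bar>C\<bar> * (norm (f dt) * norm (g dt))"
        by (simp add: mult.assoc)
      also have "\<dots> \<le> \<bar>C\<bar> * ((A * dt ^ i) * (B * dt ^ j))"
        using elim(2,3) order_trans[OF norm_ge_zero elim(2)] by (intro mult_left_mono mult_mono) auto
      finally show ?case
        by (simp add: power_add mult_ac)
    qed
  qed
qed

lemma O_dt_bound:
  assumes "\<forall>\<^sub>F dt in at_right 0. norm (g dt) \<le> C * norm (f dt)" "O_dt k f"
  shows "O_dt k g"
proof -
  obtain B where B: "\<forall>\<^sub>F dt in at_right 0. norm (f dt) \<le> B * dt ^ k"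
    using assms(2) by (rule O_dtE)
  from assms(1) B have "\<forall>\<^sub>F dt in at_right 0. norm (g dt) \<le> (\<bar>C\<bar> * B) * dt ^ k"
  proof eventually_elim
    case (elim dt)
    have "C * norm (f dt) \<le> \<bar>C\<bar> * norm (f dt)"
      by (intro mult_right_mono) auto
    with elim(1) have "norm (g dt) \<le> \<bar>C\<bar> * norm (f dt)"
      by linarith
    also have "\<dots> \<le> \<bar>C\<bar> * (B * dt ^ k)"
      using elim(2) by (rule mult_left_mono) simp
    finally show ?case
      by (simp add: mult.assoc)
  qed
  then show ?thesis
    by (rule O_dtI)
qed

lemma O_dt_cong:
  assumes "\<forall>\<^sub>F dt in at_right 0. f dt = g dt" "O_dt k f"
  shows "O_dt k g"
  using assms(1) by (intro O_dt_bound[OF _ assms(2), of _ 1]) (auto elim: eventually_mono)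

lemma O_dt_add:
  assumes "O_dt k f" "O_dt k g"
  shows "O_dt k (\<lambda>dt. f dt + g dt)"
proof -
  obtain A where A: "\<forall>\<^sub>F dt in at_right 0. norm (f dt) \<le> A * dt ^ k"
    using assms(1) by (rule O_dtE)
  obtain B where B: "\<forall>\<^sub>F dt in at_right 0. norm (g dt) \<le> B * dt ^ k"
    using assms(2) by (rule O_dtE)
  from A B have "\<forall>\<^sub>F dt in at_right 0. norm (f dt + g dt) \<le> (A + B) * dt ^ k"
    by eventually_elim (simp add: distrib_right norm_triangle_le)
  then show ?thesis
    by (rule O_dtI)
qed

lemma O_dt_minus: "O_dt k f \<Longrightarrow> O_dt k (\<lambda>dt. - f dt)"
  by (simp add: O_dt_def)

lemma O_dt_diff: "O_dt k f \<Longrightarrow> O_dt k g \<Longrightarrow> O_dt k (\<lambda>dt. f dt - g dt)"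
  using O_dt_add[OF _ O_dt_minus] by simp

lemma O_dt_scaleR: "O_dt k f \<Longrightarrow> O_dt k (\<lambda>dt. c *\<^sub>R f dt)"
  by (rule O_dt_bound[of _ "\<bar>c\<bar>"]) simp_all

lemma O_dt_mono:
  assumes "j \<le> k" "O_dt k f"
  shows "O_dt j f"
proof -
  obtain C where C: "0 \<le> C" "\<forall>\<^sub>F dt in at_right 0. norm (f dt) \<le> C * dt ^ k"
    using assms(2) by (rule O_dtE)
  from C(2) eventually_dt_in_unit have "\<forall>\<^sub>F dt in at_right 0. norm (f dt) \<le> C * dt ^ j"
    by eventually_elim (meson C(1) assms(1) less_imp_le mult_left_mono order_trans power_decreasing)
  then show ?thesis
    by (rule O_dtI)
qed

lemma O_dt_dt_scaleR_iff: "O_dt (Suc k) (\<lambda>dt. dt *\<^sub>R f dt) \<longleftrightarrow> O_dt k f"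
proof
  assume "O_dt (Suc k) (\<lambda>dt. dt *\<^sub>R f dt)"
  then obtain C where "\<forall>\<^sub>F dt in at_right 0. norm (dt *\<^sub>R f dt) \<le> C * dt ^ Suc k"
    by (rule O_dtE)
  with eventually_dt_in_unit have "\<forall>\<^sub>F dt in at_right 0. norm (f dt) \<le> C * dt ^ k"
    by eventually_elim (simp add: mult.left_commute)
  then show "O_dt k f"
    by (rule O_dtI)
next
  assume "O_dt k f"
  have "O_dt 1 (\<lambda>dt::real. dt)"
    by (rule O_dtI[of _ 1]) (auto intro: eventually_mono[OF eventually_dt_in_unit])
  from O_dt_mult_bound[OF _ this \<open>O_dt k f\<close>, of "\<lambda>dt. dt *\<^sub>R f dt" 1]
  show "O_dt (Suc k) (\<lambda>dt. dt *\<^sub>R f dt)"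
    by simp
qed

lemma O_dt_half_dt_scaleR: "O_dt k f \<Longrightarrow> O_dt (Suc k) (\<lambda>dt. (dt / 2) *\<^sub>R f dt)"
  using O_dt_dt_scaleR_iff[of k "\<lambda>dt. (1 / 2) *\<^sub>R f dt"] O_dt_scaleR[of k f "1 / 2"] by simp

lemma O_dt_matrix_vector_mult:
  fixes A :: "real \<Rightarrow> real^'n^'m"
  shows "O_dt i A \<Longrightarrow> O_dt j x \<Longrightarrow> O_dt (i + j) (\<lambda>dt. A dt *v x dt)"
  by (rule O_dt_mult_bound[of _ 1]) (simp_all add: norm_matrix_vector_mult_le)

lemma O_dt_matrix_mult:
  fixes A :: "real \<Rightarrow> real^'n^'m" and B :: "real \<Rightarrow> real^'k^'n"
  shows "O_dt i A \<Longrightarrow> O_dt j B \<Longrightarrow> O_dt (i + j) (\<lambda>dt. A dt ** B dt)"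
  by (rule O_dt_mult_bound[of _ 1]) (simp_all add: norm_matrix_mult_le)

lemma O_dt_transpose_iff: "O_dt k (\<lambda>dt. transpose (A dt :: real^'n^'m)) \<longleftrightarrow> O_dt k A"
  by (simp add: O_dt_def norm_transpose)

lemma O_dt_norm_power: "O_dt 1 d \<Longrightarrow> O_dt k (\<lambda>dt. norm (d dt) ^ k)"
proof (induction k)
  case 0
  show ?case using O_dt_const[of "1::real"] by simp
next
  case (Suc k)
  from O_dt_mult_bound[OF _ Suc.prems Suc.IH[OF Suc.prems], of "\<lambda>dt. norm (d dt) ^ Suc k" 1]
  show ?case
    by simp
qed

lemma O_dt_tendsto_zero:
  assumes "O_dt k f" "0 < k"
  shows "(f \<longlongrightarrow> 0) (at_right 0)"
proof -
  obtain C where C: "\<forall>\<^sub>F dt in at_right 0. norm (f dt) \<le> C * dt ^ k"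
    using assms(1) by (rule O_dtE)
  have "((\<lambda>dt::real. dt ^ k) \<longlongrightarrow> 0 ^ k) (at_right 0)"
    by (intro tendsto_power tendsto_ident_at)
  then have "((\<lambda>dt::real. dt ^ k) \<longlongrightarrow> 0) (at_right 0)"
    using assms(2) by simp
  moreover from C eventually_dt_in_unit
  have "\<forall>\<^sub>F dt in at_right 0. norm (f dt) \<le> norm (dt ^ k) * C"
    by eventually_elim (simp add: mult.commute)
  ultimately show ?thesis
    by (rule tendsto_0_le)
qed

lemma O_dt_absorb:
  assumes "\<forall>\<^sub>F dt in at_right 0. norm (f dt) \<le> C + e dt * norm (f dt)" and "(e \<longlongrightarrow> 0) (at_right 0)"
  shows "O_dt 0 f"
proof (rule O_dtI[of _ "2 * C"])
  have "\<forall>\<^sub>F dt in at_right 0. e dt < 1 / 2"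
    using order_tendstoD(2)[OF assms(2), of "1 / 2"] by simp
  with assms(1) show "\<forall>\<^sub>F dt in at_right 0. norm (f dt) \<le> 2 * C * dt ^ 0"
  proof eventually_elim
    case (elim dt)
    have "e dt * norm (f dt) \<le> 1 / 2 * norm (f dt)"
      using elim(2) by (intro mult_right_mono) auto
    with elim(1) show ?case
      by simp
  qed
qed

lemma O_dt_bounded_on:
  assumes "\<forall>y\<in>K. norm (g y) \<le> B" "\<forall>\<^sub>F dt in at_right 0. y dt \<in> K"
  shows "O_dt 0 (\<lambda>dt. g (y dt))"
  using assms(2) by (intro O_dtI[of _ B]) (auto elim: eventually_mono simp: assms(1))

lemma O_dt_lipschitz_on:
  assumes "\<forall>y\<in>K. \<forall>y'\<in>K. norm (g y' - g y) \<le> L * norm (y' - y)" "x \<in> K"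
    and "\<forall>\<^sub>F dt in at_right 0. y dt \<in> K" "O_dt k (\<lambda>dt. y dt - x)"
  shows "O_dt k (\<lambda>dt. g (y dt) - g x)"
  using assms(3)
  by (intro O_dt_bound[OF _ assms(4), of _ L]) (auto elim: eventually_mono simp: assms(1,2))

lemma O_dt_taylor:
  fixes f :: "'a::euclidean_space \<Rightarrow> 'b::euclidean_space"
  assumes "smooth_map f" "compact K" "convex K" "x \<in> K" "0 < n"
    and "\<forall>\<^sub>F dt in at_right 0. x + d dt \<in> K" "O_dt 1 d"
  shows "O_dt (k + n) (\<lambda>dt. dirderiv (replicate k (d dt)) f (x + d dt)
           - (\<Sum>j<n. (1 / fact j) *\<^sub>R dirderiv (replicate (k + j) (d dt)) f x))"
proof -
  obtain C where C: "\<forall>x\<in>K. \<forall>d. x + d \<in> K \<longrightarrow>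
    norm (dirderiv (replicate k d) f (x + d)
          - (\<Sum>j<n. (1 / fact j) *\<^sub>R dirderiv (replicate (k + j) d) f x)) \<le> C * norm d ^ (k + n)"
    using taylor_dirderiv[OF assms(1-3,5)] by blast
  show ?thesis
    using assms(6) C assms(4)
    by (intro O_dt_bound[OF _ O_dt_norm_power[OF assms(7)], of _ C]) (auto elim: eventually_mono)
qed


lemma O_dt_matrix_vector_mult_diff:
  fixes A B :: "real \<Rightarrow> real^'n^'m"
  assumes "O_dt 0 A" "O_dt j y" "O_dt i (\<lambda>dt. B dt - A dt)" "O_dt (i + j) (\<lambda>dt. y dt - x dt)"
  shows "O_dt (i + j) (\<lambda>dt. B dt *v y dt - A dt *v x dt)"
proof -
  have "O_dt (i + j) (\<lambda>dt. (B dt - A dt) *v y dt + A dt *v (y dt - x dt))"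
    using O_dt_add[OF O_dt_matrix_vector_mult[OF assms(3,2)]
        O_dt_matrix_vector_mult[OF assms(1,4), simplified]] .
  then show ?thesis
    by (simp add: algebra_simps)
qed

lemma O_dt_matrix_mult_diff:
  fixes A B :: "real \<Rightarrow> real^'n^'m" and X Y :: "real \<Rightarrow> real^'k^'n"
  assumes "O_dt 0 A" "O_dt j Y" "O_dt i (\<lambda>dt. B dt - A dt)" "O_dt (i + j) (\<lambda>dt. Y dt - X dt)"
  shows "O_dt (i + j) (\<lambda>dt. B dt ** Y dt - A dt ** X dt)"
proof -
  have "O_dt (i + j) (\<lambda>dt. (B dt - A dt) ** Y dt + A dt ** (Y dt - X dt))"
    using O_dt_add[OF O_dt_matrix_mult[OF assms(3,2)] O_dt_matrix_mult[OF assms(1,4), simplified]] .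
  then show ?thesis
    by (simp add: matrix_diff_mult matrix_mult_diff)
qed

text \<open>A perturbation of size \<open>O(dt)\<close> of an invertible matrix has a bounded inverse, which is
  itself an \<open>O(dt)\<close>-perturbation of the inverse; both follow from
  \<open>A\<^sup>-\<^sup>1 = A\<^sub>0\<^sup>-\<^sup>1 + A\<^sub>0\<^sup>-\<^sup>1 (A\<^sub>0 - A) A\<^sup>-\<^sup>1\<close> by absorbing the last term.\<close>

lemma O_dt_matrix_inv:
  fixes A :: "real \<Rightarrow> real^'n^'n"
  assumes inv: "\<forall>\<^sub>F dt in at_right 0. invertible (A dt)" "invertible A0"
    and close: "O_dt 1 (\<lambda>dt. A dt - A0)"
  shows "O_dt 0 (\<lambda>dt. matrix_inv (A dt))" "O_dt 1 (\<lambda>dt. matrix_inv (A dt) - matrix_inv A0)"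
proof -
  let ?K0 = "matrix_inv A0"
  have eq: "\<forall>\<^sub>F dt in at_right 0. matrix_inv (A dt) - ?K0 = ?K0 ** (A0 - A dt) ** matrix_inv (A dt)"
    using inv(1) by (rule eventually_mono) (rule matrix_inv_diff[OF _ inv(2)])
  have "((\<lambda>dt. norm ?K0 * norm (A dt - A0)) \<longlongrightarrow> 0) (at_right 0)"
    using tendsto_mult_right_zero[OF tendsto_norm_zero[OF O_dt_tendsto_zero[OF close zero_less_one]]] .
  moreover from eq have "\<forall>\<^sub>F dt in at_right 0.
      norm (matrix_inv (A dt)) \<le> norm ?K0 + (norm ?K0 * norm (A dt - A0)) * norm (matrix_inv (A dt))"
  proof eventually_elim
    case (elim dt)
    have "norm (matrix_inv (A dt)) \<le> norm ?K0 + norm (?K0 ** (A0 - A dt) ** matrix_inv (A dt))"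
      using norm_triangle_ineq[of ?K0 "matrix_inv (A dt) - ?K0"] unfolding elim[symmetric] by simp
    also have "norm (?K0 ** (A0 - A dt) ** matrix_inv (A dt))
        \<le> norm ?K0 * norm (A0 - A dt) * norm (matrix_inv (A dt))"
      using norm_matrix_mult_le[of "?K0 ** (A0 - A dt)" "matrix_inv (A dt)"]
        norm_matrix_mult_le[of ?K0 "A0 - A dt"]
      by (meson mult_right_mono norm_ge_zero order_trans)
    finally show ?case
      by (simp add: norm_minus_commute)
  qed
  ultimately show bounded: "O_dt 0 (\<lambda>dt. matrix_inv (A dt))"
    by (intro O_dt_absorb)
  have "O_dt 1 (\<lambda>dt. A0 - A dt)"
    using O_dt_minus[OF close] by simp
  from O_dt_matrix_mult[OF O_dt_matrix_mult[OF O_dt_const this] bounded]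
  have "O_dt 1 (\<lambda>dt. ?K0 ** (A0 - A dt) ** matrix_inv (A dt))"
    by simp
  moreover have "\<forall>\<^sub>F dt in at_right 0. ?K0 ** (A0 - A dt) ** matrix_inv (A dt) = matrix_inv (A dt) - ?K0"
    using eq by (rule eventually_mono) simp
  ultimately show "O_dt 1 (\<lambda>dt. matrix_inv (A dt) - ?K0)"
    by (rule O_dt_cong[rotated])
qed

section \<open>One step of the constrained splitting scheme\<close>

text \<open>Stated over an abstract real vector space: on \<open>real^'m\<close> the simplifier would also
  normalise vectors as elements of a ring.\<close>

lemma taylor_remainders_combine:
  fixes a0 a1 b0 b1 c :: "'a::real_vector"
  shows "- (a1 - (a0 + b0)) + (1 / 2) *\<^sub>R (b1 - b0) - (a0 + (1 / 2) *\<^sub>R b0) = - a1 + (1 / 2) *\<^sub>R b1"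
    and "- (a1 - (a0 + b0 + (1 / 2) *\<^sub>R c)) + (1 / 2) *\<^sub>R (b1 - (b0 + c))
           = (a0 + (1 / 2) *\<^sub>R b0) + (- a1 + (1 / 2) *\<^sub>R b1)"
  by (simp_all add: algebra_simps, simp_all flip: scaleR_add_left)

declare transpose_matrix_vector [simp del]

text \<open>Steps (1) and (2) of the scheme for all small \<open>dt > 0\<close>, on the branch of solutions of the
  nonlinear constraint \<open>\<xi>(q\<^sup>n\<^sup>+\<^sup>1) = z\<close> along which \<open>q\<^sup>n\<^sup>+\<^sup>1 \<rightarrow> q\<^sup>n\<close>.\<close>

locale constrained_splitting_step =
  fixes M \<gamma> \<sigma> :: "real^'n^'n" and \<xi> :: "real^'n \<Rightarrow> real^'m" and V :: "real^'n \<Rightarrow> real"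
    and z :: "real^'m" and qn pn Gn :: "real^'n"
    and p14 p12 q1 p34 :: "real \<Rightarrow> real^'n" and lam14 lam12 lam34 :: "real \<Rightarrow> real^'m"
  assumes xi_smooth: "smooth_map \<xi>" and V_smooth: "smooth_map V"
    and G_invertible: "\<And>q. \<xi> q = z \<Longrightarrow> invertible (G_M M \<xi> q)"
    and qn_on: "\<xi> qn = z"
    and step: "\<forall>\<^sub>F dt in at_right 0.
         p14 dt = pn - (dt / 4) *\<^sub>R ((\<gamma> ** matrix_inv M) *v (pn + p14 dt))
                  + sqrt (dt / 2) *\<^sub>R (\<sigma> *v Gn) + grad_xi \<xi> qn *v lam14 dt
       \<and> transpose (grad_xi \<xi> qn) *v (matrix_inv M *v p14 dt) = 0
       \<and> p12 dt = p14 dt - (dt / 2) *\<^sub>R grad_V V qn + grad_xi \<xi> qn *v lam12 dt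
       \<and> q1 dt = qn + dt *\<^sub>R (matrix_inv M *v p12 dt)
       \<and> \<xi> (q1 dt) = z
       \<and> p34 dt = p12 dt - (dt / 2) *\<^sub>R grad_V V (q1 dt) + grad_xi \<xi> (q1 dt) *v lam34 dt
       \<and> transpose (grad_xi \<xi> (q1 dt)) *v (matrix_inv M *v p34 dt) = 0"
    and q1_tendsto: "(q1 \<longlongrightarrow> qn) (at_right 0)"
begin

abbreviation Mi where "Mi \<equiv> matrix_inv M"
abbreviation J where "J y \<equiv> jacobian \<xi> (at y)"
abbreviation G where "G y \<equiv> G_M M \<xi> y"
abbreviation Ginv where "Ginv y \<equiv> matrix_inv (G y)"
abbreviation H where "H y \<equiv> hess_xi \<xi> y"
abbreviation gV where "gV y \<equiv> grad_V V y"
abbreviation u where "u dt \<equiv> Mi *v p12 dt"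
abbreviation K where "K \<equiv> cball qn 1"

lemma G_eq: "G y = J y ** Mi ** transpose (J y)"
  by (simp add: G_M_def grad_xi_def)

lemma G_mult: "G y *v v = J y *v (Mi *v (transpose (J y) *v v))"
  by (simp add: G_eq matrix_vector_mul_assoc[symmetric])

lemma f_rgd_eq: "f_rgd M \<xi> V y p = Ginv y *v (J y *v (Mi *v gV y)) - Ginv y *v H y (Mi *v p) (Mi *v p)"
  by (simp add: f_rgd_def grad_xi_def)

lemma Ginv_mult_G: "\<xi> y = z \<Longrightarrow> Ginv y *v (G y *v v) = v"
  by (simp add: matrix_vector_mul_assoc invertible_matrix_inv(2)[OF G_invertible])

lemma eventually_step:
  "\<forall>\<^sub>F dt in at_right 0. 0 < dt \<and> dt \<le> 1 \<and> q1 dt \<in> K \<and> \<xi> (q1 dt) = z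
     \<and> q1 dt = qn + dt *\<^sub>R u dt
     \<and> p14 dt = pn - (dt / 4) *\<^sub>R ((\<gamma> ** Mi) *v (pn + p14 dt)) + sqrt (dt / 2) *\<^sub>R (\<sigma> *v Gn)
                  + transpose (J qn) *v lam14 dt
     \<and> J qn *v (Mi *v p14 dt) = 0
     \<and> p12 dt = p14 dt - (dt / 2) *\<^sub>R gV qn + transpose (J qn) *v lam12 dt
     \<and> p34 dt = p12 dt - (dt / 2) *\<^sub>R gV (q1 dt) + transpose (J (q1 dt)) *v lam34 dt
     \<and> J (q1 dt) *v (Mi *v p34 dt) = 0"
proof -
  have "\<forall>\<^sub>F dt in at_right 0. dist (q1 dt) qn < 1"
    using tendstoD[OF q1_tendsto zero_less_one] .
  with step eventually_dt_in_unit show ?thesis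
  proof eventually_elim
    case (elim dt)
    have "q1 dt \<in> K"
      using elim(3) by (simp add: dist_commute)
    with elim(1,2) show ?case
      unfolding grad_xi_def transpose_transpose by blast
  qed
qed

lemma eventually_dt_q1:
  "\<forall>\<^sub>F dt in at_right 0. 0 < dt \<and> dt \<le> 1 \<and> q1 dt \<in> K \<and> \<xi> (q1 dt) = z"
  using eventually_step by (rule eventually_mono) blast

lemma eventually_q1_in_K: "\<forall>\<^sub>F dt in at_right 0. q1 dt \<in> K"
  using eventually_dt_q1 by (rule eventually_mono) blast

lemma eventually_q1_eq: "\<forall>\<^sub>F dt in at_right 0. q1 dt - qn = dt *\<^sub>R u dt"
  using eventually_step by (rule eventually_mono) (metis add_diff_cancel_left')

lemma eventually_p14_eq: "\<forall>\<^sub>F dt in at_right 0.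
    p14 dt = pn - (dt / 4) *\<^sub>R ((\<gamma> ** Mi) *v (pn + p14 dt)) + sqrt (dt / 2) *\<^sub>R (\<sigma> *v Gn)
             + transpose (J qn) *v lam14 dt"
  using eventually_step by (rule eventually_mono) blast

lemma eventually_p14_tangent: "\<forall>\<^sub>F dt in at_right 0. J qn *v (Mi *v p14 dt) = 0"
  using eventually_step by (rule eventually_mono) blast

lemma eventually_p12_eq:
  "\<forall>\<^sub>F dt in at_right 0. p12 dt = p14 dt - (dt / 2) *\<^sub>R gV qn + transpose (J qn) *v lam12 dt"
  using eventually_step by (rule eventually_mono) blast

lemma eventually_p34_eq:
  "\<forall>\<^sub>F dt in at_right 0. p34 dt = p12 dt - (dt / 2) *\<^sub>R gV (q1 dt) + transpose (J (q1 dt)) *v lam34 dt"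
  using eventually_step by (rule eventually_mono) blast

lemma eventually_p34_tangent: "\<forall>\<^sub>F dt in at_right 0. J (q1 dt) *v (Mi *v p34 dt) = 0"
  using eventually_step by (rule eventually_mono) blast

text \<open>\<open>P\<close> projects onto the momenta satisfying the tangency condition at \<open>q\<^sup>n\<close>, along the
  constraint forces \<open>\<nabla>\<xi>(q\<^sup>n) \<lambda>\<close>; applied to step (1) it eliminates \<open>\<lambda>\<^sup>n\<^sup>+\<^sup>1\<^sup>/\<^sup>4\<close>.\<close>

lemma O_dt_p14: "O_dt 0 p14"
proof -
  define P where "P = mat 1 - transpose (J qn) ** Ginv qn ** J qn ** Mi"
  define L where "L = \<gamma> ** Mi"
  define c where "c = norm P * (norm pn + norm L * norm pn + norm (\<sigma> *v Gn))"
  have P_mult: "P *v v = v - transpose (J qn) *v (Ginv qn *v (J qn *v (Mi *v v)))" for v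
    by (simp add: P_def matrix_vector_mult_diff_rdistrib matrix_vector_mul_assoc[symmetric])
  have P_force: "P *v (transpose (J qn) *v l) = 0" for l
    using Ginv_mult_G[OF qn_on, of l] by (simp add: P_mult G_mult)
  have "\<forall>\<^sub>F dt in at_right 0. norm (p14 dt) \<le> c + (norm P * norm L * dt) * norm (p14 dt)"
    using eventually_dt_q1 eventually_p14_eq eventually_p14_tangent
  proof eventually_elim
    case (elim dt)
    have "p14 dt = P *v p14 dt"
      using elim(3) by (simp add: P_mult)
    also have "\<dots> = P *v (pn - (dt / 4) *\<^sub>R (L *v (pn + p14 dt)) + sqrt (dt / 2) *\<^sub>R (\<sigma> *v Gn))"
      by (subst (1) elim(2)) (simp add: L_def P_force algebra_simps)
    finally have p14_eq:
      "p14 dt = P *v (pn - (dt / 4) *\<^sub>R (L *v (pn + p14 dt)) + sqrt (dt / 2) *\<^sub>R (\<sigma> *v Gn))" .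
    have "norm ((dt / 4) *\<^sub>R (L *v (pn + p14 dt))) \<le> dt * (norm L * (norm pn + norm (p14 dt)))"
    proof -
      have "norm (L *v (pn + p14 dt)) \<le> norm L * (norm pn + norm (p14 dt))"
        by (rule order_trans[OF norm_matrix_vector_mult_le])
          (simp add: mult_left_mono norm_triangle_ineq)
      then have "dt / 4 * norm (L *v (pn + p14 dt)) \<le> dt * (norm L * (norm pn + norm (p14 dt)))"
        using elim by (intro mult_mono) auto
      then show ?thesis
        using elim by simp
    qed
    moreover have "norm (sqrt (dt / 2) *\<^sub>R (\<sigma> *v Gn)) \<le> norm (\<sigma> *v Gn)"
      using elim by (simp add: mult_left_le_one_le)
    ultimately have "norm (pn - (dt / 4) *\<^sub>R (L *v (pn + p14 dt)) + sqrt (dt / 2) *\<^sub>R (\<sigma> *v Gn))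
        \<le> norm pn + dt * (norm L * (norm pn + norm (p14 dt))) + norm (\<sigma> *v Gn)"
      using norm_triangle_ineq[of "pn - (dt / 4) *\<^sub>R (L *v (pn + p14 dt))" "sqrt (dt / 2) *\<^sub>R (\<sigma> *v Gn)"]
        norm_triangle_ineq4[of pn "(dt / 4) *\<^sub>R (L *v (pn + p14 dt))"] by linarith
    then have "norm (p14 dt)
        \<le> norm P * (norm pn + dt * (norm L * (norm pn + norm (p14 dt))) + norm (\<sigma> *v Gn))"
      by (subst p14_eq) (rule order_trans[OF norm_matrix_vector_mult_le mult_left_mono]; simp)
    also have "\<dots> = norm P * norm pn + dt * (norm P * norm L * norm pn) + norm P * norm (\<sigma> *v Gn)
        + (norm P * norm L * dt) * norm (p14 dt)"
      by (simp add: algebra_simps)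
    also have "\<dots> \<le> c + (norm P * norm L * dt) * norm (p14 dt)"
      using mult_left_le_one_le[of "norm P * norm L * norm pn" dt] elim
      by (simp add: c_def algebra_simps)
    finally show ?case .
  qed
  moreover have "((\<lambda>dt. norm P * norm L * dt) \<longlongrightarrow> 0) (at_right 0)"
    by (intro tendsto_eq_intros) auto
  ultimately show ?thesis
    by (rule O_dt_absorb)
qed

lemma G_mult_multiplier:
  assumes "p' = p + transpose (J y) *v l"
  shows "G y *v l = J y *v (Mi *v p') - J y *v (Mi *v p)"
  using assms by (simp add: G_mult algebra_simps)

lemma eventually_lam12_eq:
  "\<forall>\<^sub>F dt in at_right 0. lam12 dt = Ginv qn *v (J qn *v u dt + (dt / 2) *\<^sub>R (J qn *v (Mi *v gV qn)))"
  using eventually_p12_eq eventually_p14_tangent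
proof eventually_elim
  case (elim dt)
  have "G qn *v lam12 dt = J qn *v u dt - J qn *v (Mi *v (p14 dt - (dt / 2) *\<^sub>R gV qn))"
    using elim(1) by (intro G_mult_multiplier) simp
  also have "\<dots> = J qn *v u dt + (dt / 2) *\<^sub>R (J qn *v (Mi *v gV qn))"
    using elim(2) by (simp add: algebra_simps)
  finally show ?case
    using Ginv_mult_G[OF qn_on, of "lam12 dt"] by simp
qed

lemma eventually_lam34_eq:
  "\<forall>\<^sub>F dt in at_right 0. lam34 dt
     = Ginv (q1 dt) *v (- (J (q1 dt) *v u dt) + (dt / 2) *\<^sub>R (J (q1 dt) *v (Mi *v gV (q1 dt))))"
  using eventually_p34_eq eventually_p34_tangent eventually_dt_q1
proof eventually_elim
  case (elim dt)
  have "G (q1 dt) *v lam34 dt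
      = J (q1 dt) *v (Mi *v p34 dt) - J (q1 dt) *v (Mi *v (p12 dt - (dt / 2) *\<^sub>R gV (q1 dt)))"
    using elim(1) by (intro G_mult_multiplier) simp
  also have "\<dots> = - (J (q1 dt) *v u dt) + (dt / 2) *\<^sub>R (J (q1 dt) *v (Mi *v gV (q1 dt)))"
    using elim(2) by (simp add: algebra_simps)
  finally show ?case
    using elim(3) Ginv_mult_G[of "q1 dt" "lam34 dt"] by simp
qed

lemma dirderiv_scaleR:
  "dirderiv [a *\<^sub>R v] \<xi> y = a *\<^sub>R (J y *v v)"
  "dirderiv [a *\<^sub>R v, a *\<^sub>R v] \<xi> y = a\<^sup>2 *\<^sub>R H y v v"
  using dirderiv_snoc_linear[OF xi_smooth, of "[]" a v 0 0 y]
    dirderiv_snoc_linear[OF xi_smooth, of "[v]" a v 0 0 y]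
    dirderiv_Cons_linear[OF xi_smooth, of a v 0 0 "[a *\<^sub>R v]" y]
  by (simp_all add: jacobian_mult_eq_dirderiv[OF xi_smooth] hess_xi_eq_dirderiv[OF xi_smooth]
      power2_eq_square)

text \<open>Second-order Taylor expansion of \<open>\<xi>\<close> between the two points of the constraint manifold
  makes the normal velocity \<open>\<nabla>\<xi>(q\<^sup>n)\<^sup>T u\<close> as small as the step \<open>q\<^sup>n\<^sup>+\<^sup>1 - q\<^sup>n\<close>.\<close>

lemma J_qn_u_bound: "\<exists>C. \<forall>\<^sub>F dt in at_right 0. norm (J qn *v u dt) \<le> C * norm (q1 dt - qn) * norm (u dt)"
proof -
  obtain C where C: "\<forall>x\<in>K. \<forall>d. x + d \<in> K \<longrightarrow>
      norm (dirderiv (replicate 0 d) \<xi> (x + d)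
            - (\<Sum>j<2. (1 / fact j) *\<^sub>R dirderiv (replicate (0 + j) d) \<xi> x))
        \<le> C * norm d ^ (0 + 2)"
    using taylor_dirderiv[OF xi_smooth compact_cball convex_cball, of 2 qn 1 0] by auto
  have "\<forall>\<^sub>F dt in at_right 0. norm (J qn *v u dt) \<le> C * norm (q1 dt - qn) * norm (u dt)"
    using eventually_dt_q1 eventually_q1_eq
  proof eventually_elim
    case (elim dt)
    have "norm (dirderiv [q1 dt - qn] \<xi> qn) \<le> C * norm (q1 dt - qn) ^ 2"
      using C[rule_format, of qn "q1 dt - qn"] elim(1) qn_on by (simp add: numeral_2_eq_2)
    moreover have "dirderiv [q1 dt - qn] \<xi> qn = dt *\<^sub>R (J qn *v u dt)"
      by (simp only: elim(2) dirderiv_scaleR)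
    moreover have "norm (q1 dt - qn) = dt * norm (u dt)"
      using elim by simp
    ultimately have "dt * norm (J qn *v u dt) \<le> dt * (C * norm (q1 dt - qn) * norm (u dt))"
      using elim(1) by (simp add: power2_eq_square mult_ac)
    then show ?case
      using elim(1) by simp
  qed
  then show ?thesis ..
qed

lemma lam12_bound: "\<exists>B C. \<forall>\<^sub>F dt in at_right 0. norm (lam12 dt) \<le> B + C * norm (q1 dt - qn) * norm (u dt)"
proof -
  obtain C where C: "\<forall>\<^sub>F dt in at_right 0. norm (J qn *v u dt) \<le> C * norm (q1 dt - qn) * norm (u dt)"
    using J_qn_u_bound by blast
  define w where "w = J qn *v (Mi *v gV qn)"
  have "\<forall>\<^sub>F dt in at_right 0.
      norm (lam12 dt) \<le> norm (Ginv qn) * norm w + (norm (Ginv qn) * C) * norm (q1 dt - qn) * norm (u dt)"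
    using C eventually_dt_q1 eventually_lam12_eq
  proof eventually_elim
    case (elim dt)
    have "norm (lam12 dt) \<le> norm (Ginv qn) * norm (J qn *v u dt + (dt / 2) *\<^sub>R w)"
      unfolding elim(3) w_def by (rule norm_matrix_vector_mult_le)
    also have "\<dots> \<le> norm (Ginv qn) * (C * norm (q1 dt - qn) * norm (u dt) + norm w)"
    proof (rule mult_left_mono)
      have "norm ((dt / 2) *\<^sub>R w) \<le> norm w"
        using elim(2) by (intro norm_scaleR_le_norm) simp
      then show "norm (J qn *v u dt + (dt / 2) *\<^sub>R w) \<le> C * norm (q1 dt - qn) * norm (u dt) + norm w"
        using elim(1) norm_triangle_ineq[of "J qn *v u dt" "(dt / 2) *\<^sub>R w"] by linarith
    qed simp
    finally show ?case
      by (simp add: algebra_simps)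
  qed
  then show ?thesis
    by blast
qed

text \<open>The coefficient of \<open>|u|\<close> in the bound for \<open>\<lambda>\<^sup>n\<^sup>+\<^sup>1\<^sup>/\<^sup>2\<close> vanishes as \<open>dt \<rightarrow> 0\<close>, so
  \<open>|u| \<le> |M\<^sup>-\<^sup>1| (|p\<^sup>n\<^sup>+\<^sup>1\<^sup>/\<^sup>4| + |\<nabla>V| + |\<nabla>\<xi>| |\<lambda>\<^sup>n\<^sup>+\<^sup>1\<^sup>/\<^sup>2|)\<close> can be absorbed.\<close>

lemma O_dt_u: "O_dt 0 u"
proof -
  obtain B C where BC: "\<forall>\<^sub>F dt in at_right 0. norm (lam12 dt) \<le> B + C * norm (q1 dt - qn) * norm (u dt)"
    using lam12_bound by blast
  obtain P where P: "\<forall>\<^sub>F dt in at_right 0. norm (p14 dt) \<le> P * dt ^ 0"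
    using O_dt_p14 by (rule O_dtE)
  define b where "b = norm Mi * norm (transpose (J qn))"
  define e where "e dt = b * C * norm (q1 dt - qn)" for dt
  have "\<forall>\<^sub>F dt in at_right 0. norm (u dt) \<le> norm Mi * (P + norm (gV qn)) + b * B + e dt * norm (u dt)"
    using BC P eventually_dt_q1 eventually_p12_eq
  proof eventually_elim
    case (elim dt)
    have "norm (p12 dt)
        \<le> norm (p14 dt) + norm ((dt / 2) *\<^sub>R gV qn) + norm (transpose (J qn) *v lam12 dt)"
      unfolding elim(4)
      using norm_triangle_ineq[of "p14 dt - (dt / 2) *\<^sub>R gV qn" "transpose (J qn) *v lam12 dt"]
        norm_triangle_ineq4[of "p14 dt" "(dt / 2) *\<^sub>R gV qn"] by linarith
    also have "\<dots> \<le> P + norm (gV qn) + norm (transpose (J qn)) * norm (lam12 dt)"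
      using elim(2,3) norm_matrix_vector_mult_le[of "transpose (J qn)" "lam12 dt"]
        norm_scaleR_le_norm[of "dt / 2" "gV qn"] by simp
    finally have "norm Mi * norm (p12 dt)
        \<le> norm Mi * (P + norm (gV qn) + norm (transpose (J qn)) * norm (lam12 dt))"
      by (rule mult_left_mono) simp
    also have "\<dots> = norm Mi * (P + norm (gV qn)) + b * norm (lam12 dt)"
      by (simp add: b_def algebra_simps)
    also have "\<dots> \<le> norm Mi * (P + norm (gV qn)) + b * (B + C * norm (q1 dt - qn) * norm (u dt))"
      using elim(1) by (simp add: b_def mult_left_mono)
    finally show ?case
      using norm_matrix_vector_mult_le[of Mi "p12 dt"] by (simp add: e_def algebra_simps)
  qed
  moreover have "(e \<longlongrightarrow> 0) (at_right 0)"
    unfolding e_def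
    using tendsto_diff[OF q1_tendsto tendsto_const[of qn]]
    by (intro tendsto_mult_right_zero tendsto_norm_zero) simp
  ultimately show ?thesis
    by (rule O_dt_absorb)
qed

lemma O_dt_q1_diff: "O_dt 1 (\<lambda>dt. q1 dt - qn)"
proof -
  have "O_dt 1 (\<lambda>dt. dt *\<^sub>R u dt)"
    using O_dt_dt_scaleR_iff[of 0 u] O_dt_u by (simp add: One_nat_def)
  moreover have "\<forall>\<^sub>F dt in at_right 0. dt *\<^sub>R u dt = q1 dt - qn"
    using eventually_q1_eq by (rule eventually_mono) simp
  ultimately show ?thesis
    by (rule O_dt_cong[rotated])
qed

lemma O_dt_J_q1: "O_dt 0 (\<lambda>dt. J (q1 dt))" "O_dt 1 (\<lambda>dt. J (q1 dt) - J qn)"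
proof -
  obtain B L where "\<forall>y\<in>K. norm (J y) \<le> B" "\<forall>y\<in>K. \<forall>y'\<in>K. norm (J y' - J y) \<le> L * norm (y' - y)"
    using jacobian_bounded_lipschitz[OF xi_smooth compact_cball convex_cball] by blast
  then show "O_dt 0 (\<lambda>dt. J (q1 dt))" "O_dt 1 (\<lambda>dt. J (q1 dt) - J qn)"
    using O_dt_bounded_on[of K J B q1, OF _ eventually_q1_in_K]
      O_dt_lipschitz_on[of K J L qn q1 1, OF _ _ eventually_q1_in_K O_dt_q1_diff]
    by simp_all
qed

lemma O_dt_gV_q1: "O_dt 0 (\<lambda>dt. gV (q1 dt))" "O_dt 1 (\<lambda>dt. gV (q1 dt) - gV qn)"
proof -
  obtain B L where "\<forall>y\<in>K. norm (gV y) \<le> B" "\<forall>y\<in>K. \<forall>y'\<in>K. norm (gV y' - gV y) \<le> L * norm (y' - y)"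
    using grad_V_bounded_lipschitz[OF V_smooth compact_cball convex_cball] by blast
  then show "O_dt 0 (\<lambda>dt. gV (q1 dt))" "O_dt 1 (\<lambda>dt. gV (q1 dt) - gV qn)"
    using O_dt_bounded_on[of K gV B q1, OF _ eventually_q1_in_K]
      O_dt_lipschitz_on[of K gV L qn q1 1, OF _ _ eventually_q1_in_K O_dt_q1_diff]
    by simp_all
qed

lemma bilinear_H: "bilinear (H y)"
proof -
  have last: "dirderiv [w, a *\<^sub>R v + b *\<^sub>R v'] \<xi> y
      = a *\<^sub>R dirderiv [w, v] \<xi> y + b *\<^sub>R dirderiv [w, v'] \<xi> y"
    for a b w v v'
    using dirderiv_snoc_linear[OF xi_smooth, of "[w]"] by simp
  have first: "dirderiv [a *\<^sub>R w + b *\<^sub>R w', v] \<xi> y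
      = a *\<^sub>R dirderiv [w, v] \<xi> y + b *\<^sub>R dirderiv [w', v] \<xi> y"
    for a b w w' v
    using dirderiv_Cons_linear[OF xi_smooth] by blast
  show ?thesis
    unfolding bilinear_def hess_xi_eq_dirderiv[OF xi_smooth]
    using last[where a = 1 and b = 1] last[where b = 0] first[where a = 1 and b = 1] first[where b = 0]
    by (auto intro!: linearI)
qed

lemma O_dt_H:
  assumes "\<forall>\<^sub>F dt in at_right 0. y dt \<in> K" "O_dt i v" "O_dt j w"
  shows "O_dt (i + j) (\<lambda>dt. H (y dt) (v dt) (w dt))"
proof -
  obtain C where C: "\<forall>y\<in>K. \<forall>ws. length ws = 2 \<longrightarrow> norm (dirderiv ws \<xi> y) \<le> C * prod_list (map norm ws)"
    using dirderiv_bounded[OF xi_smooth compact_cball] by blast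
  have "\<forall>\<^sub>F dt in at_right 0. norm (H (y dt) (v dt) (w dt)) \<le> C * norm (v dt) * norm (w dt)"
  proof (rule eventually_mono[OF assms(1)])
    fix dt assume "y dt \<in> K"
    then show "norm (H (y dt) (v dt) (w dt)) \<le> C * norm (v dt) * norm (w dt)"
      using C[rule_format, of "y dt" "[w dt, v dt]"]
      by (simp add: hess_xi_eq_dirderiv[OF xi_smooth] mult_ac)
  qed
  then show ?thesis
    using assms(2,3) by (rule O_dt_mult_bound)
qed

lemma O_dt_H_diff:
  assumes "O_dt i v" "O_dt j w"
  shows "O_dt (Suc (i + j)) (\<lambda>dt. H (q1 dt) (v dt) (w dt) - H qn (v dt) (w dt))"
proof -
  obtain L where L: "\<forall>ws y y'. length ws = 2 \<longrightarrow> y \<in> K \<longrightarrow> y' \<in> K \<longrightarrow>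
      norm (dirderiv ws \<xi> y' - dirderiv ws \<xi> y) \<le> L * prod_list (map norm ws) * norm (y' - y)"
    using dirderiv_lipschitz[OF xi_smooth compact_cball convex_cball] by blast
  have "\<forall>\<^sub>F dt in at_right 0. norm (H (q1 dt) (v dt) (w dt) - H qn (v dt) (w dt))
      \<le> L * norm (norm (q1 dt - qn) * norm (v dt)) * norm (w dt)"
  proof (rule eventually_mono[OF eventually_q1_in_K])
    fix dt assume "q1 dt \<in> K"
    then show "norm (H (q1 dt) (v dt) (w dt) - H qn (v dt) (w dt))
        \<le> L * norm (norm (q1 dt - qn) * norm (v dt)) * norm (w dt)"
      using L[rule_format, of "[w dt, v dt]" qn "q1 dt"]
      by (simp add: hess_xi_eq_dirderiv[OF xi_smooth] mult_ac)
  qed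
  moreover have "O_dt (1 + i) (\<lambda>dt. norm (q1 dt - qn) * norm (v dt))"
    by (rule O_dt_mult_bound[of _ 1 "\<lambda>dt. q1 dt - qn" v, OF _ O_dt_q1_diff assms(1)])
      (simp add: abs_mult)
  ultimately have "O_dt (1 + i + j) (\<lambda>dt. H (q1 dt) (v dt) (w dt) - H qn (v dt) (w dt))"
    using assms(2) by (rule O_dt_mult_bound)
  then show ?thesis
    by simp
qed

lemma O_dt_taylor_step:
  assumes "0 < n"
  shows "O_dt (k + n) (\<lambda>dt. dirderiv (replicate k (q1 dt - qn)) \<xi> (q1 dt)
           - (\<Sum>j<n. (1 / fact j) *\<^sub>R dirderiv (replicate (k + j) (q1 dt - qn)) \<xi> qn))"
  using O_dt_taylor[where f = \<xi> and K = K and x = qn and n = n and d = "\<lambda>dt. q1 dt - qn" and k = k]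
    xi_smooth assms eventually_q1_in_K O_dt_q1_diff
  by simp

lemma eventually_dirderiv_step:
  "\<forall>\<^sub>F dt in at_right 0. \<forall>y. dirderiv [q1 dt - qn] \<xi> y = dt *\<^sub>R (J y *v u dt)
      \<and> dirderiv [q1 dt - qn, q1 dt - qn] \<xi> y = dt\<^sup>2 *\<^sub>R H y (u dt) (u dt)"
  using eventually_q1_eq by (rule eventually_mono) (simp add: dirderiv_scaleR del: dirderiv.simps)

text \<open>The defects of the constraint \<open>\<xi>(q\<^sup>n\<^sup>+\<^sup>1) = \<xi>(q\<^sup>n)\<close> seen from either end point, divided by \<open>dt\<close>:
  its Taylor expansions of order 3 and 4 about \<open>q\<^sup>n\<close> make both \<open>O(dt\<^sup>2)\<close> and their sum \<open>O(dt\<^sup>3)\<close>.\<close>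

abbreviation defect_qn where "defect_qn dt \<equiv> J qn *v u dt + (dt / 2) *\<^sub>R H qn (u dt) (u dt)"
abbreviation defect_q1 where
  "defect_q1 dt \<equiv> - (J (q1 dt) *v u dt) + (dt / 2) *\<^sub>R H (q1 dt) (u dt) (u dt)"

lemma O_dt_defects:
  "O_dt 2 defect_qn" "O_dt 2 defect_q1" "O_dt 3 (\<lambda>dt. defect_qn dt + defect_q1 dt)"
proof -
  define D1 where "D1 y dt = dirderiv [q1 dt - qn] \<xi> y" for y dt
  define D2 where "D2 y dt = dirderiv [q1 dt - qn, q1 dt - qn] \<xi> y" for y dt
  define D3 where "D3 dt = dirderiv [q1 dt - qn, q1 dt - qn, q1 dt - qn] \<xi> qn" for dt
  \<comment> \<open>\<open>Tkn\<close>: the \<open>k\<close>-th derivative along \<open>q\<^sup>n\<^sup>+\<^sup>1 - q\<^sup>n\<close> at \<open>q\<^sup>n\<^sup>+\<^sup>1\<close>, expanded to order \<open>n\<close> about \<open>q\<^sup>n\<close>\<close>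
  have T03: "O_dt 3 (\<lambda>dt. \<xi> (q1 dt) - (\<xi> qn + D1 qn dt + (1 / 2) *\<^sub>R D2 qn dt))"
    using O_dt_taylor_step[of 3 0] by (simp add: D1_def D2_def eval_nat_numeral del: dirderiv.simps(2))
  have T12: "O_dt 3 (\<lambda>dt. D1 (q1 dt) dt - (D1 qn dt + D2 qn dt))"
    using O_dt_taylor_step[of 2 1] by (simp add: D1_def D2_def eval_nat_numeral del: dirderiv.simps(2))
  have T21: "O_dt 3 (\<lambda>dt. D2 (q1 dt) dt - D2 qn dt)"
    using O_dt_taylor_step[of 1 2] by (simp add: D2_def eval_nat_numeral del: dirderiv.simps(2))
  have T13: "O_dt 4 (\<lambda>dt. D1 (q1 dt) dt - (D1 qn dt + D2 qn dt + (1 / 2) *\<^sub>R D3 dt))"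
    using O_dt_taylor_step[of 3 1]
    by (simp add: D1_def D2_def D3_def eval_nat_numeral del: dirderiv.simps(2))
  have T22: "O_dt 4 (\<lambda>dt. D2 (q1 dt) dt - (D2 qn dt + D3 dt))"
    using O_dt_taylor_step[of 2 2] by (simp add: D2_def D3_def eval_nat_numeral del: dirderiv.simps(2))
  have "\<forall>\<^sub>F dt in at_right 0. \<forall>y. D1 y dt = dt *\<^sub>R (J y *v u dt) \<and> D2 y dt = dt\<^sup>2 *\<^sub>R H y (u dt) (u dt)"
    using eventually_dirderiv_step by (simp add: D1_def D2_def)
  then have scaled: "\<forall>\<^sub>F dt in at_right 0.
      dt *\<^sub>R defect_qn dt = D1 qn dt + (1 / 2) *\<^sub>R D2 qn dt
    \<and> dt *\<^sub>R defect_q1 dt = - D1 (q1 dt) dt + (1 / 2) *\<^sub>R D2 (q1 dt) dt"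
    by (rule eventually_mono) (simp add: algebra_simps power2_eq_square)
  have "\<forall>\<^sub>F dt in at_right 0.
      - (\<xi> (q1 dt) - (\<xi> qn + D1 qn dt + (1 / 2) *\<^sub>R D2 qn dt)) = dt *\<^sub>R defect_qn dt"
    using eventually_dt_q1 scaled by eventually_elim (simp add: qn_on)
  from O_dt_cong[OF this O_dt_minus[OF T03]]
  have scaled_qn: "O_dt 3 (\<lambda>dt. dt *\<^sub>R defect_qn dt)" .
  then show "O_dt 2 defect_qn"
    using O_dt_dt_scaleR_iff[of 2 defect_qn] by (simp add: eval_nat_numeral)
  have "\<forall>\<^sub>F dt in at_right 0.
      - (D1 (q1 dt) dt - (D1 qn dt + D2 qn dt)) + (1 / 2) *\<^sub>R (D2 (q1 dt) dt - D2 qn dt)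
      - dt *\<^sub>R defect_qn dt = dt *\<^sub>R defect_q1 dt"
    using scaled by (rule eventually_mono) (simp only: taylor_remainders_combine)
  from O_dt_cong[OF this O_dt_diff[OF O_dt_add[OF O_dt_minus[OF T12] O_dt_scaleR[OF T21]] scaled_qn]]
  show "O_dt 2 defect_q1"
    using O_dt_dt_scaleR_iff[of 2 defect_q1] by (simp add: eval_nat_numeral)
  have "\<forall>\<^sub>F dt in at_right 0. - (D1 (q1 dt) dt - (D1 qn dt + D2 qn dt + (1 / 2) *\<^sub>R D3 dt))
      + (1 / 2) *\<^sub>R (D2 (q1 dt) dt - (D2 qn dt + D3 dt)) = dt *\<^sub>R (defect_qn dt + defect_q1 dt)"
    using scaled by (rule eventually_mono) (simp only: taylor_remainders_combine scaleR_add_right)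
  from O_dt_cong[OF this O_dt_add[OF O_dt_minus[OF T13] O_dt_scaleR[OF T22]]]
  show "O_dt 3 (\<lambda>dt. defect_qn dt + defect_q1 dt)"
    using O_dt_dt_scaleR_iff[of 3 "\<lambda>dt. defect_qn dt + defect_q1 dt"] by (simp add: eval_nat_numeral)
qed

lemma O_dt_transpose_J_q1:
  "O_dt 0 (\<lambda>dt. transpose (J (q1 dt)))" "O_dt 1 (\<lambda>dt. transpose (J (q1 dt)) - transpose (J qn))"
  using O_dt_J_q1 by (simp_all add: O_dt_transpose_iff transpose_diff[symmetric])

lemma O_dt_G_q1: "O_dt 1 (\<lambda>dt. G (q1 dt) - G qn)"
proof -
  have "O_dt 1 (\<lambda>dt. J (q1 dt) ** Mi - J qn ** Mi)"
    using O_dt_matrix_mult[OF O_dt_J_q1(2) O_dt_const[of Mi]] by (simp add: matrix_diff_mult)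
  then show ?thesis
    using O_dt_matrix_mult_diff[where A = "\<lambda>_. J qn ** Mi" and B = "\<lambda>dt. J (q1 dt) ** Mi"
        and X = "\<lambda>_. transpose (J qn)" and Y = "\<lambda>dt. transpose (J (q1 dt))" and i = 1 and j = 0,
        OF O_dt_const O_dt_transpose_J_q1(1)]
      O_dt_transpose_J_q1(2)
    by (simp add: G_eq)
qed

lemma O_dt_Ginv_q1: "O_dt 0 (\<lambda>dt. Ginv (q1 dt))" "O_dt 1 (\<lambda>dt. Ginv (q1 dt) - Ginv qn)"
proof -
  have "\<forall>\<^sub>F dt in at_right 0. invertible (G (q1 dt))"
    using eventually_dt_q1 by (rule eventually_mono) (simp add: G_invertible)
  from O_dt_matrix_inv[OF this G_invertible[OF qn_on] O_dt_G_q1]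
  show "O_dt 0 (\<lambda>dt. Ginv (q1 dt))" "O_dt 1 (\<lambda>dt. Ginv (q1 dt) - Ginv qn)" .
qed

lemma O_dt_f_rgd_p12:
  "O_dt 0 (\<lambda>dt. f_rgd M \<xi> V qn (p12 dt))"
  "O_dt 0 (\<lambda>dt. f_rgd M \<xi> V (q1 dt) (p12 dt))"
  "O_dt 1 (\<lambda>dt. f_rgd M \<xi> V (q1 dt) (p12 dt) - f_rgd M \<xi> V qn (p12 dt))"
proof -
  have H_qn: "O_dt 0 (\<lambda>dt. H qn (u dt) (u dt))"
    using O_dt_H[of "\<lambda>_. qn", OF _ O_dt_u O_dt_u] by simp
  have H_q1: "O_dt 0 (\<lambda>dt. H (q1 dt) (u dt) (u dt))"
    using O_dt_H[OF eventually_q1_in_K O_dt_u O_dt_u] by simp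
  have grad_term_q1: "O_dt 0 (\<lambda>dt. J (q1 dt) *v (Mi *v gV (q1 dt)))"
    using O_dt_matrix_vector_mult[OF O_dt_J_q1(1) O_dt_matrix_vector_mult[OF O_dt_const O_dt_gV_q1(1)]]
    by simp
  have "O_dt 1 (\<lambda>dt. Mi *v gV (q1 dt) - Mi *v gV qn)"
    using O_dt_matrix_vector_mult[OF O_dt_const O_dt_gV_q1(2), of Mi] by (simp add: algebra_simps)
  then have grad_term_diff: "O_dt 1 (\<lambda>dt. J (q1 dt) *v (Mi *v gV (q1 dt)) - J qn *v (Mi *v gV qn))"
    using O_dt_matrix_vector_mult_diff[OF O_dt_const _ O_dt_J_q1(2), of 0] grad_term_q1
      O_dt_matrix_vector_mult[OF O_dt_const O_dt_gV_q1(1), of Mi]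
    by simp
  show "O_dt 0 (\<lambda>dt. f_rgd M \<xi> V qn (p12 dt))"
    unfolding f_rgd_eq
    by (intro O_dt_diff O_dt_matrix_vector_mult[where i = 0 and j = 0, simplified] O_dt_const H_qn)
  show "O_dt 0 (\<lambda>dt. f_rgd M \<xi> V (q1 dt) (p12 dt))"
    unfolding f_rgd_eq
    by (intro O_dt_diff O_dt_matrix_vector_mult[where i = 0 and j = 0, simplified]
        O_dt_Ginv_q1(1) grad_term_q1 H_q1)
  have "O_dt 1 (\<lambda>dt. Ginv (q1 dt) *v (J (q1 dt) *v (Mi *v gV (q1 dt)))
      - Ginv qn *v (J qn *v (Mi *v gV qn)))"
    using O_dt_matrix_vector_mult_diff[OF O_dt_const grad_term_q1 O_dt_Ginv_q1(2)] grad_term_diff by simp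
  moreover have "O_dt 1 (\<lambda>dt. Ginv (q1 dt) *v H (q1 dt) (u dt) (u dt) - Ginv qn *v H qn (u dt) (u dt))"
    using O_dt_matrix_vector_mult_diff[OF O_dt_const H_q1 O_dt_Ginv_q1(2)] O_dt_H_diff[OF O_dt_u O_dt_u]
    by simp
  ultimately show "O_dt 1 (\<lambda>dt. f_rgd M \<xi> V (q1 dt) (p12 dt) - f_rgd M \<xi> V qn (p12 dt))"
    unfolding f_rgd_eq by (rule O_dt_cong[rotated, OF O_dt_diff]) (simp add: algebra_simps)
qed

lemma lam12_expansion: "O_dt 2 (\<lambda>dt. lam12 dt - (dt / 2) *\<^sub>R f_rgd M \<xi> V qn (p12 dt))"
proof -
  have "\<forall>\<^sub>F dt in at_right 0. Ginv qn *v defect_qn dt = lam12 dt - (dt / 2) *\<^sub>R f_rgd M \<xi> V qn (p12 dt)"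
    using eventually_lam12_eq by (rule eventually_mono) (simp add: f_rgd_eq algebra_simps)
  moreover have "O_dt 2 (\<lambda>dt. Ginv qn *v defect_qn dt)"
    using O_dt_matrix_vector_mult[OF O_dt_const O_dt_defects(1), of "Ginv qn"]
    by (simp add: eval_nat_numeral)
  ultimately show ?thesis
    by (rule O_dt_cong)
qed

lemma lam34_expansion: "O_dt 2 (\<lambda>dt. lam34 dt - (dt / 2) *\<^sub>R f_rgd M \<xi> V (q1 dt) (p12 dt))"
proof -
  have "\<forall>\<^sub>F dt in at_right 0.
      Ginv (q1 dt) *v defect_q1 dt = lam34 dt - (dt / 2) *\<^sub>R f_rgd M \<xi> V (q1 dt) (p12 dt)"
    using eventually_lam34_eq by (rule eventually_mono) (simp add: f_rgd_eq algebra_simps)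
  moreover have "O_dt 2 (\<lambda>dt. Ginv (q1 dt) *v defect_q1 dt)"
    using O_dt_matrix_vector_mult[OF O_dt_Ginv_q1(1) O_dt_defects(2)] by (simp add: eval_nat_numeral)
  ultimately show ?thesis
    by (rule O_dt_cong)
qed

text \<open>The two defects enter with the multipliers \<open>G\<^sub>M(q)\<^sup>-\<^sup>1\<close> at the two end points; their sum is
  \<open>O(dt\<^sup>3)\<close> and the inverses differ by \<open>O(dt)\<close>.\<close>

lemma lam_sum_expansion:
  "O_dt 3 (\<lambda>dt. lam12 dt + lam34 dt
     - (dt / 2) *\<^sub>R (f_rgd M \<xi> V qn (p12 dt) + f_rgd M \<xi> V (q1 dt) (p12 dt)))"
proof -
  have eq: "\<forall>\<^sub>F dt in at_right 0.
      Ginv qn *v (defect_qn dt + defect_q1 dt) + (Ginv (q1 dt) - Ginv qn) *v defect_q1 dt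
    = lam12 dt + lam34 dt - (dt / 2) *\<^sub>R (f_rgd M \<xi> V qn (p12 dt) + f_rgd M \<xi> V (q1 dt) (p12 dt))"
    using eventually_lam12_eq eventually_lam34_eq by eventually_elim (simp add: f_rgd_eq algebra_simps)
  have "O_dt 3 (\<lambda>dt. Ginv qn *v (defect_qn dt + defect_q1 dt))"
    using O_dt_matrix_vector_mult[OF O_dt_const O_dt_defects(3)] by (simp add: eval_nat_numeral)
  moreover have "O_dt 3 (\<lambda>dt. (Ginv (q1 dt) - Ginv qn) *v defect_q1 dt)"
    using O_dt_matrix_vector_mult[OF O_dt_Ginv_q1(2) O_dt_defects(2)] by (simp add: eval_nat_numeral)
  ultimately show ?thesis
    using O_dt_cong[OF eq O_dt_add] by blast
qed

lemma O_dt_lam: "O_dt 1 lam12" "O_dt 1 lam34" "O_dt 2 (\<lambda>dt. lam34 dt - lam12 dt)"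
proof -
  have half_f: "O_dt 1 (\<lambda>dt. (dt / 2) *\<^sub>R f_rgd M \<xi> V qn (p12 dt))"
    "O_dt 1 (\<lambda>dt. (dt / 2) *\<^sub>R f_rgd M \<xi> V (q1 dt) (p12 dt))"
    using O_dt_half_dt_scaleR[OF O_dt_f_rgd_p12(1)] O_dt_half_dt_scaleR[OF O_dt_f_rgd_p12(2)]
    by simp_all
  show "O_dt 1 lam12"
    using O_dt_add[OF O_dt_mono[OF _ lam12_expansion] half_f(1)] by simp
  show "O_dt 1 lam34"
    using O_dt_add[OF O_dt_mono[OF _ lam34_expansion] half_f(2)] by simp
  have "O_dt 2 (\<lambda>dt. (dt / 2) *\<^sub>R (f_rgd M \<xi> V (q1 dt) (p12 dt) - f_rgd M \<xi> V qn (p12 dt)))"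
    using O_dt_half_dt_scaleR[OF O_dt_f_rgd_p12(3)] by (simp add: eval_nat_numeral)
  from O_dt_add[OF O_dt_diff[OF lam34_expansion lam12_expansion] this]
  show "O_dt 2 (\<lambda>dt. lam34 dt - lam12 dt)"
    by (simp add: algebra_simps)
qed

lemma eventually_momentum_shifts: "\<forall>\<^sub>F dt in at_right 0.
      Mi *v ((dt / 2) *\<^sub>R gV qn - transpose (J qn) *v lam12 dt) = Mi *v p14 dt - u dt
    \<and> Mi *v (transpose (J (q1 dt)) *v lam34 dt - (dt / 2) *\<^sub>R gV (q1 dt)) = Mi *v p34 dt - u dt"
  using eventually_p12_eq eventually_p34_eq
proof eventually_elim
  case (elim dt)
  have "(dt / 2) *\<^sub>R gV qn - transpose (J qn) *v lam12 dt = p14 dt - p12 dt"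
    by (subst elim(1)) simp
  moreover have "transpose (J (q1 dt)) *v lam34 dt - (dt / 2) *\<^sub>R gV (q1 dt) = p34 dt - p12 dt"
    by (subst elim(2)) simp
  ultimately show ?case
    by (simp add: matrix_vector_mult_diff_distrib)
qed

lemma O_dt_momentum_shifts:
  "O_dt 1 (\<lambda>dt. Mi *v p14 dt - u dt)" "O_dt 1 (\<lambda>dt. Mi *v p34 dt - u dt)"
  "O_dt 2 (\<lambda>dt. (Mi *v p14 dt - u dt) + (Mi *v p34 dt - u dt))"
proof -
  have half_gV: "O_dt 1 (\<lambda>dt. (dt / 2) *\<^sub>R gV qn)" "O_dt 1 (\<lambda>dt. (dt / 2) *\<^sub>R gV (q1 dt))"
    using O_dt_half_dt_scaleR[OF O_dt_const] O_dt_half_dt_scaleR[OF O_dt_gV_q1(1)] by simp_all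
  have force: "O_dt 1 (\<lambda>dt. transpose (J qn) *v lam12 dt)"
    "O_dt 1 (\<lambda>dt. transpose (J (q1 dt)) *v lam34 dt)"
    using O_dt_matrix_vector_mult[OF O_dt_const O_dt_lam(1)]
      O_dt_matrix_vector_mult[OF O_dt_transpose_J_q1(1) O_dt_lam(2)] by simp_all
  have "O_dt 1 (\<lambda>dt. Mi *v ((dt / 2) *\<^sub>R gV qn - transpose (J qn) *v lam12 dt))"
    using O_dt_matrix_vector_mult[OF O_dt_const O_dt_diff[OF half_gV(1) force(1)]] by simp
  moreover have "\<forall>\<^sub>F dt in at_right 0.
      Mi *v ((dt / 2) *\<^sub>R gV qn - transpose (J qn) *v lam12 dt) = Mi *v p14 dt - u dt"
    using eventually_momentum_shifts by (rule eventually_mono) blast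
  ultimately show "O_dt 1 (\<lambda>dt. Mi *v p14 dt - u dt)"
    by (rule O_dt_cong[rotated])
  have "O_dt 1 (\<lambda>dt. Mi *v (transpose (J (q1 dt)) *v lam34 dt - (dt / 2) *\<^sub>R gV (q1 dt)))"
    using O_dt_matrix_vector_mult[OF O_dt_const O_dt_diff[OF force(2) half_gV(2)]] by simp
  moreover have "\<forall>\<^sub>F dt in at_right 0.
      Mi *v (transpose (J (q1 dt)) *v lam34 dt - (dt / 2) *\<^sub>R gV (q1 dt)) = Mi *v p34 dt - u dt"
    using eventually_momentum_shifts by (rule eventually_mono) blast
  ultimately show "O_dt 1 (\<lambda>dt. Mi *v p34 dt - u dt)"
    by (rule O_dt_cong[rotated])
  have "O_dt 2 (\<lambda>dt. (dt / 2) *\<^sub>R (gV qn - gV (q1 dt)))"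
    using O_dt_half_dt_scaleR[OF O_dt_minus[OF O_dt_gV_q1(2)]] by (simp add: eval_nat_numeral)
  moreover have "O_dt 2 (\<lambda>dt. transpose (J (q1 dt)) *v lam34 dt - transpose (J qn) *v lam12 dt)"
    using O_dt_matrix_vector_mult_diff[where i = 1 and j = 1,
        OF O_dt_const O_dt_lam(2) O_dt_transpose_J_q1(2)]
      O_dt_lam(3) by (simp add: eval_nat_numeral)
  ultimately have "O_dt 2 (\<lambda>dt. Mi *v ((dt / 2) *\<^sub>R (gV qn - gV (q1 dt))
      + (transpose (J (q1 dt)) *v lam34 dt - transpose (J qn) *v lam12 dt)))"
    using O_dt_matrix_vector_mult[OF O_dt_const O_dt_add, of 2] by (simp add: eval_nat_numeral)
  then have "O_dt 2 (\<lambda>dt. Mi *v ((dt / 2) *\<^sub>R gV qn - transpose (J qn) *v lam12 dt)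
      + Mi *v (transpose (J (q1 dt)) *v lam34 dt - (dt / 2) *\<^sub>R gV (q1 dt)))"
    by (simp add: algebra_simps)
  moreover have "\<forall>\<^sub>F dt in at_right 0.
      Mi *v ((dt / 2) *\<^sub>R gV qn - transpose (J qn) *v lam12 dt)
        + Mi *v (transpose (J (q1 dt)) *v lam34 dt - (dt / 2) *\<^sub>R gV (q1 dt))
    = (Mi *v p14 dt - u dt) + (Mi *v p34 dt - u dt)"
    using eventually_momentum_shifts by (rule eventually_mono) metis
  ultimately show "O_dt 2 (\<lambda>dt. (Mi *v p14 dt - u dt) + (Mi *v p34 dt - u dt))"
    by (rule O_dt_cong[rotated])
qed

text \<open>Replacing \<open>p\<^sup>n\<^sup>+\<^sup>1\<^sup>/\<^sup>2\<close> by \<open>p\<^sup>n\<^sup>+\<^sup>1\<^sup>/\<^sup>4\<close> at \<open>q\<^sup>n\<close> and by \<open>p\<^sup>n\<^sup>+\<^sup>3\<^sup>/\<^sup>4\<close> at \<open>q\<^sup>n\<^sup>+\<^sup>1\<close> shifts the velocity by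
  \<open>e\<^sub>1, e\<^sub>3 = O(dt)\<close>; the first-order effects cancel because \<open>e\<^sub>1 + e\<^sub>3 = O(dt\<^sup>2)\<close> and the
  two end points are \<open>O(dt)\<close> apart.\<close>

lemma H_quadratic_split:
  "A0 *v (H y0 (v + e1) (v + e1) - H y0 v v) + A1 *v (H y1 (v + e3) (v + e3) - H y1 v v)
   = A0 *v (H y0 v (e1 + e3) + H y0 (e1 + e3) v + H y0 e1 e1)
     + (A1 - A0) *v (H y1 v e3 + H y1 e3 v)
     + A0 *v ((H y1 v e3 - H y0 v e3) + (H y1 e3 v - H y0 e3 v))
     + A1 *v H y1 e3 e3"
  by (simp add: bilinear_ladd[OF bilinear_H] bilinear_radd[OF bilinear_H] algebra_simps)

lemma lam_sum_expansion_tangent: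
  "O_dt 3 (\<lambda>dt. lam12 dt + lam34 dt
     - (dt / 2) *\<^sub>R (f_rgd M \<xi> V qn (p14 dt) + f_rgd M \<xi> V (q1 dt) (p34 dt)))"
proof -
  define e1 where "e1 = (\<lambda>dt. Mi *v p14 dt - u dt)"
  define e3 where "e3 = (\<lambda>dt. Mi *v p34 dt - u dt)"
  have e1: "O_dt 1 e1" and e3: "O_dt 1 e3" and e13: "O_dt 2 (\<lambda>dt. e1 dt + e3 dt)"
    unfolding e1_def e3_def by (rule O_dt_momentum_shifts)+
  have qn: "\<forall>\<^sub>F dt in at_right 0. qn \<in> K"
    by simp
  have "O_dt 2 (\<lambda>dt. H qn (u dt) (e1 dt + e3 dt) + H qn (e1 dt + e3 dt) (u dt) + H qn (e1 dt) (e1 dt))"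
    using O_dt_H[OF qn O_dt_u e13] O_dt_H[OF qn e13 O_dt_u] O_dt_H[OF qn e1 e1]
    by (simp add: O_dt_add eval_nat_numeral)
  then have T1: "O_dt 2 (\<lambda>dt. Ginv qn *v (H qn (u dt) (e1 dt + e3 dt) + H qn (e1 dt + e3 dt) (u dt)
      + H qn (e1 dt) (e1 dt)))"
    using O_dt_matrix_vector_mult[OF O_dt_const] by (simp add: eval_nat_numeral)
  have "O_dt 1 (\<lambda>dt. H (q1 dt) (u dt) (e3 dt) + H (q1 dt) (e3 dt) (u dt))"
    using O_dt_H[OF eventually_q1_in_K O_dt_u e3] O_dt_H[OF eventually_q1_in_K e3 O_dt_u]
    by (simp add: O_dt_add)
  then have T2: "O_dt 2 (\<lambda>dt. (Ginv (q1 dt) - Ginv qn)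
      *v (H (q1 dt) (u dt) (e3 dt) + H (q1 dt) (e3 dt) (u dt)))"
    using O_dt_matrix_vector_mult[OF O_dt_Ginv_q1(2)] by (simp add: eval_nat_numeral)
  have "O_dt 2 (\<lambda>dt. (H (q1 dt) (u dt) (e3 dt) - H qn (u dt) (e3 dt))
      + (H (q1 dt) (e3 dt) (u dt) - H qn (e3 dt) (u dt)))"
    using O_dt_H_diff[OF O_dt_u e3] O_dt_H_diff[OF e3 O_dt_u] by (simp add: O_dt_add eval_nat_numeral)
  then have T3: "O_dt 2 (\<lambda>dt. Ginv qn *v ((H (q1 dt) (u dt) (e3 dt) - H qn (u dt) (e3 dt))
      + (H (q1 dt) (e3 dt) (u dt) - H qn (e3 dt) (u dt))))"
    using O_dt_matrix_vector_mult[OF O_dt_const] by (simp add: eval_nat_numeral)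
  have T4: "O_dt 2 (\<lambda>dt. Ginv (q1 dt) *v H (q1 dt) (e3 dt) (e3 dt))"
    using O_dt_matrix_vector_mult[OF O_dt_Ginv_q1(1) O_dt_H[OF eventually_q1_in_K e3 e3]]
    by (simp add: eval_nat_numeral)
  have "O_dt 2 (\<lambda>dt. Ginv qn *v (H qn (u dt + e1 dt) (u dt + e1 dt) - H qn (u dt) (u dt))
      + Ginv (q1 dt) *v (H (q1 dt) (u dt + e3 dt) (u dt + e3 dt) - H (q1 dt) (u dt) (u dt)))"
    unfolding H_quadratic_split using T1 T2 T3 T4 by (intro O_dt_add)
  from O_dt_add[OF lam_sum_expansion O_dt_half_dt_scaleR[OF this, simplified]]
  show ?thesis
    by (simp add: e1_def e3_def f_rgd_eq algebra_simps)
qed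

end

theorem mainTheorem7:
  fixes N :: nat
    and M \<gamma> \<sigma> :: "real^'n^'n"
    and \<beta> :: real and z :: "real^'m"
    and \<xi> :: "real^'n \<Rightarrow> real^'m" and V :: "real^'n \<Rightarrow> real"
    and qn pn Gn Gh :: "real^'n"
    and p14 p12 q1 p34 p1 :: "real \<Rightarrow> real^'n"
    and lam14 lam12 lam34 lam1 :: "real \<Rightarrow> real^'m"
  assumes dim: "CARD('n) = 3 * N"
    and M_sym: "transpose M = M"
    and M_pd: "\<forall>x. x \<noteq> 0 \<longrightarrow> x \<bullet> (M *v x) > 0"
    and beta: "\<beta> > 0"
    and fdt: "\<sigma> ** transpose \<sigma> = (2 / \<beta>) *\<^sub>R \<gamma>"
    and V_smooth: "smooth_map V"
    and xi_smooth: "smooth_map \<xi>"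
    and G_inv: "\<forall>q. \<xi> q = z \<longrightarrow> invertible (G_M M \<xi> q)"
    and qn_on: "\<xi> qn = z"
    and scheme: "\<forall>\<^sub>F dt in at_right 0.
         p14 dt = pn - (dt / 4) *\<^sub>R ((\<gamma> ** matrix_inv M) *v (pn + p14 dt))
                  + sqrt (dt / 2) *\<^sub>R (\<sigma> *v Gn) + grad_xi \<xi> qn *v lam14 dt
       \<and> transpose (grad_xi \<xi> qn) *v (matrix_inv M *v p14 dt) = 0
       \<and> p12 dt = p14 dt - (dt / 2) *\<^sub>R grad_V V qn + grad_xi \<xi> qn *v lam12 dt
       \<and> q1 dt = qn + dt *\<^sub>R (matrix_inv M *v p12 dt)
       \<and> \<xi> (q1 dt) = z
       \<and> p34 dt = p12 dt - (dt / 2) *\<^sub>R grad_V V (q1 dt) + grad_xi \<xi> (q1 dt) *v lam34 dt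
       \<and> transpose (grad_xi \<xi> (q1 dt)) *v (matrix_inv M *v p34 dt) = 0
       \<and> p1 dt = p34 dt - (dt / 4) *\<^sub>R ((\<gamma> ** matrix_inv M) *v (p34 dt + p1 dt))
                  + sqrt (dt / 2) *\<^sub>R (\<sigma> *v Gh) + grad_xi \<xi> (q1 dt) *v lam1 dt
       \<and> transpose (grad_xi \<xi> (q1 dt)) *v (matrix_inv M *v p1 dt) = 0"
    and branch: "(q1 \<longlongrightarrow> qn) (at_right 0)"
  shows "(\<exists>C. \<forall>\<^sub>F dt in at_right 0.
            norm (lam12 dt - (dt / 2) *\<^sub>R f_rgd M \<xi> V qn (p12 dt)) \<le> C * dt ^ 2)
       \<and> (\<exists>C. \<forall>\<^sub>F dt in at_right 0.
            norm (lam34 dt - (dt / 2) *\<^sub>R f_rgd M \<xi> V (q1 dt) (p12 dt)) \<le> C * dt ^ 2)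
       \<and> (\<exists>C. \<forall>\<^sub>F dt in at_right 0.
            norm (lam12 dt + lam34 dt - (dt / 2) *\<^sub>R
                   (f_rgd M \<xi> V qn (p12 dt) + f_rgd M \<xi> V (q1 dt) (p12 dt))) \<le> C * dt ^ 3)
       \<and> (\<exists>C. \<forall>\<^sub>F dt in at_right 0.
            norm (lam12 dt + lam34 dt - (dt / 2) *\<^sub>R
                   (f_rgd M \<xi> V qn (p14 dt) + f_rgd M \<xi> V (q1 dt) (p34 dt))) \<le> C * dt ^ 3)"
proof -
  interpret constrained_splitting_step M \<gamma> \<sigma> \<xi> V z qn pn Gn p14 p12 q1 p34 lam14 lam12 lam34
    using xi_smooth V_smooth G_inv qn_on branch
    by unfold_locales (auto intro: eventually_mono[OF scheme])
  show ?thesis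
    using lam12_expansion lam34_expansion lam_sum_expansion lam_sum_expansion_tangent
    unfolding O_dt_def by blast
qed

end
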